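(* Let $M=(\mathcal{S},\mathcal{A},H,P,r,\mu)$ be a finite-horizon MDP (as in the context) whose action space $\mathcal{A}$ is a finite set. Let $\beta>0$ and let $Q=\{Q_h\}_{h=1}^H$ be continuous functions $Q_h:\mathcal{S}\times\mathcal{A}\to\mathbb{R}$. Define the softmax policy $$\pi_h^{Q,\beta}(a\mid s)=\frac{\exp(\beta Q_h(s,a))}{\sum_{a'\in\mathcal{A}}\exp(\beta Q_h(s,a'))},$$ and define $\pi^{Q^*,\beta}$ in the same way with $Q_h$ replaced by the optimal Q-value functions $Q_h^*$. Then $$0\le J^*(M)-J(M,\pi^{Q,\beta})\le \frac{H\log|\mathcal{A}|}{\beta}+2\beta H\sum_{h=1}^H\mathbb{E}_{M,\pi^{Q^*,\beta}}\Big[\max_{a\in\mathcal{A}}|Q_h^*(S_h,a)-Q_h(S_h,a)|\Big].$$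
   Context: A finite-horizon MDP $M=(\mathcal{S},\mathcal{A},H,P,r,\mu)$ consists of a state space $\mathcal{S}$ (a subset of a Euclidean space), an action space $\mathcal{A}$, a horizon $H\in\mathbb{N}$, transition kernels $P(\cdot\mid h,s,a)\in\mathcal{P}(\mathcal{S})$ for $(h,s,a)\in[H]\times\mathcal{S}\times\mathcal{A}$, a deterministic continuous reward function $r:[H]\times\mathcal{S}\times\mathcal{A}\to[0,1]$, and an initial distribution $\mu\in\mathcal{P}(\mathcal{S})$. A policy is a family $\pi=\{\pi_h(\cdot\mid s)\}_{h\in[H]}$ of distributions on $\mathcal{A}$ indexed by states. Under $\pi$, a trajectory is generated by $S_1\sim\mu$, $A_h\sim\pi_h(\cdot\mid S_h)$, $S_{h+1}\sim P(\cdot\mid h,S_h,A_h)$; $\mathbb{E}_{M,\pi}$ denotes expectation over this trajectory. $J(M,\pi)=\mathbb{E}_{M,\pi}[\sum_{h=1}^H r(h,S_h,A_h)]$ and $J^*(M)=\sup_\pi J(M,\pi)$. The Q-value function is $Q_h^\pi(s,a)=\mathbb{E}_{M,\pi}[\sum_{h'=h}^H r(h',S_{h'},A_{h'})\mid S_h=s,A_h=a]$, and $Q_h^*(s,a)=\sup_\pi Q_h^\pi(s,a)$. *)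

theory Defs
  imports "HOL-Probability.Probability"
begin

(* Finite-horizon MDP with state space SS (a subset of a Euclidean space, with the
   restricted Borel sigma-algebra), finite action type 'a (action space = UNIV),
   horizon H (steps 1..H), kernels P h s a, reward r h s a, initial law mu. *)

definition SM :: "'s::topological_space set \<Rightarrow> 's measure" where
  "SM SS = restrict_space borel SS"

definition SAM :: "'s::topological_space set \<Rightarrow> ('s \<times> 'a) measure" where
  "SAM SS = SM SS \<Otimes>\<^sub>M count_space (UNIV :: 'a set)"

definition is_mdp :: "'s::euclidean_space set \<Rightarrow> nat \<Rightarrow> (nat \<Rightarrow> 's \<Rightarrow> 'a::finite \<Rightarrow> 's measure)
    \<Rightarrow> (nat \<Rightarrow> 's \<Rightarrow> 'a \<Rightarrow> real) \<Rightarrow> 's measure \<Rightarrow> bool" where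
  "is_mdp SS H P r \<mu> \<longleftrightarrow>
     prob_space \<mu> \<and> sets \<mu> = sets (SM SS) \<and>
     (\<forall>h\<in>{1..H}. \<forall>s\<in>SS. \<forall>a. prob_space (P h s a) \<and> sets (P h s a) = sets (SM SS)) \<and>
     (\<forall>h\<in>{1..H}. (\<lambda>(s, a). P h s a) \<in> measurable (SAM SS) (subprob_algebra (SM SS))) \<and>
     (\<forall>h\<in>{1..H}. \<forall>s\<in>SS. \<forall>a. 0 \<le> r h s a \<and> r h s a \<le> 1) \<and>
     (\<forall>h\<in>{1..H}. \<forall>a. continuous_on SS (\<lambda>s. r h s a))"

definition is_policy :: "'s::topological_space set \<Rightarrow> nat \<Rightarrow> (nat \<Rightarrow> 's \<Rightarrow> 'a pmf) \<Rightarrow> bool" where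
  "is_policy SS H \<pi> \<longleftrightarrow> (\<forall>h\<in>{1..H}. \<forall>a. (\<lambda>s. pmf (\<pi> h s) a) \<in> borel_measurable (SM SS))"

definition act_kernel :: "'s::topological_space set \<Rightarrow> (nat \<Rightarrow> 's \<Rightarrow> 'a pmf) \<Rightarrow> nat \<Rightarrow> 's \<Rightarrow> ('s \<times> 'a) measure" where
  "act_kernel SS \<pi> h s = distr (measure_pmf (\<pi> h s)) (SAM SS) (\<lambda>a. (s, a))"

(* given (S_h, A_h) = (s,a), law of (S_{h+1}, A_{h+1}) *)
definition step_kernel :: "'s::topological_space set \<Rightarrow> (nat \<Rightarrow> 's \<Rightarrow> 'a \<Rightarrow> 's measure)
    \<Rightarrow> (nat \<Rightarrow> 's \<Rightarrow> 'a pmf) \<Rightarrow> nat \<Rightarrow> 's \<times> 'a \<Rightarrow> ('s \<times> 'a) measure" where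
  "step_kernel SS P \<pi> h = (\<lambda>(s, a). P h s a \<bind> act_kernel SS \<pi> (Suc h))"

(* occ SS P pi h0 D n = law of (S_{h0+n}, A_{h0+n}) when (S_{h0}, A_{h0}) ~ D *)
primrec occ :: "'s::topological_space set \<Rightarrow> (nat \<Rightarrow> 's \<Rightarrow> 'a \<Rightarrow> 's measure)
    \<Rightarrow> (nat \<Rightarrow> 's \<Rightarrow> 'a pmf) \<Rightarrow> nat \<Rightarrow> ('s \<times> 'a) measure \<Rightarrow> nat \<Rightarrow> ('s \<times> 'a) measure" where
  "occ SS P \<pi> h0 D 0 = D"
| "occ SS P \<pi> h0 D (Suc n) = occ SS P \<pi> h0 D n \<bind> step_kernel SS P \<pi> (h0 + n)"

definition init_dist :: "'s::topological_space set \<Rightarrow> 's measure \<Rightarrow> (nat \<Rightarrow> 's \<Rightarrow> 'a pmf) \<Rightarrow> ('s \<times> 'a) measure" where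
  "init_dist SS \<mu> \<pi> = \<mu> \<bind> act_kernel SS \<pi> 1"

(* law of (S_h, A_h) under E_{M,pi} *)
definition traj_law :: "'s::topological_space set \<Rightarrow> (nat \<Rightarrow> 's \<Rightarrow> 'a \<Rightarrow> 's measure) \<Rightarrow> 's measure
    \<Rightarrow> (nat \<Rightarrow> 's \<Rightarrow> 'a pmf) \<Rightarrow> nat \<Rightarrow> ('s \<times> 'a) measure" where
  "traj_law SS P \<mu> \<pi> h = occ SS P \<pi> 1 (init_dist SS \<mu> \<pi>) (h - 1)"

(* J(M, pi) = E_{M,pi}[ sum_{h=1}^H r(h, S_h, A_h) ] *)
definition mdp_J :: "'s::topological_space set \<Rightarrow> nat \<Rightarrow> (nat \<Rightarrow> 's \<Rightarrow> 'a \<Rightarrow> 's measure)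
    \<Rightarrow> (nat \<Rightarrow> 's \<Rightarrow> 'a \<Rightarrow> real) \<Rightarrow> 's measure \<Rightarrow> (nat \<Rightarrow> 's \<Rightarrow> 'a pmf) \<Rightarrow> real" where
  "mdp_J SS H P r \<mu> \<pi> = (\<Sum>h = 1..H. \<integral>x. r h (fst x) (snd x) \<partial>traj_law SS P \<mu> \<pi> h)"

definition mdp_Jstar :: "'s::topological_space set \<Rightarrow> nat \<Rightarrow> (nat \<Rightarrow> 's \<Rightarrow> 'a \<Rightarrow> 's measure)
    \<Rightarrow> (nat \<Rightarrow> 's \<Rightarrow> 'a \<Rightarrow> real) \<Rightarrow> 's measure \<Rightarrow> real" where
  "mdp_Jstar SS H P r \<mu> = (SUP \<pi>\<in>{\<pi>. is_policy SS H \<pi>}. mdp_J SS H P r \<mu> \<pi>)"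

(* Q^pi_h(s,a) = E_{M,pi}[ sum_{h'=h}^H r(h', S_h', A_h') | S_h = s, A_h = a ] *)
definition Qpi :: "'s::topological_space set \<Rightarrow> nat \<Rightarrow> (nat \<Rightarrow> 's \<Rightarrow> 'a \<Rightarrow> 's measure)
    \<Rightarrow> (nat \<Rightarrow> 's \<Rightarrow> 'a \<Rightarrow> real) \<Rightarrow> (nat \<Rightarrow> 's \<Rightarrow> 'a pmf) \<Rightarrow> nat \<Rightarrow> 's \<Rightarrow> 'a \<Rightarrow> real" where
  "Qpi SS H P r \<pi> h s a =
     (\<Sum>k = h..H. \<integral>x. r k (fst x) (snd x) \<partial>occ SS P \<pi> h (return (SAM SS) (s, a)) (k - h))"

definition Qstar :: "'s::topological_space set \<Rightarrow> nat \<Rightarrow> (nat \<Rightarrow> 's \<Rightarrow> 'a \<Rightarrow> 's measure)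
    \<Rightarrow> (nat \<Rightarrow> 's \<Rightarrow> 'a \<Rightarrow> real) \<Rightarrow> nat \<Rightarrow> 's \<Rightarrow> 'a \<Rightarrow> real" where
  "Qstar SS H P r h s a = (SUP \<pi>\<in>{\<pi>. is_policy SS H \<pi>}. Qpi SS H P r \<pi> h s a)"

definition softmax_policy :: "real \<Rightarrow> (nat \<Rightarrow> 's \<Rightarrow> 'a::finite \<Rightarrow> real) \<Rightarrow> nat \<Rightarrow> 's \<Rightarrow> 'a pmf" where
  "softmax_policy \<beta> Q h s =
     embed_pmf (\<lambda>a. exp (\<beta> * Q h s a) / (\<Sum>a'\<in>UNIV. exp (\<beta> * Q h s a')))"

end

theory Submission
  imports Defs
begin

text \<open>
  Backward induction gives the optimal Q-function \<open>Qopt\<close>; it dominates the Q-function of every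
  policy (which solves the policy-evaluation recursion, by telescoping the expected rewards along the
  trajectory) and is attained by a greedy policy, so \<open>Qopt = Q\<^sup>*\<close>. For the softmax policy
  \<open>\<pi> = \<pi>\<^sup>Q\<^sup>,\<^sup>\<beta>\<close> and \<open>\<pi>\<^sup>* = \<pi>\<^sup>Q\<^sup>*\<^sup>,\<^sup>\<beta>\<close>, the value gap \<open>\<Delta>\<^sub>h = V\<^sup>*\<^sub>h - V\<^sup>\<pi>\<^sub>h\<close> satisfies
  \<open>\<Delta>\<^sub>h(s) \<le> ln |A| / \<beta> + 2 \<beta> H max\<^sub>a |Q\<^sup>*\<^sub>h - Q\<^sub>h|(s) + E[\<Delta>\<^sub>h\<^sub>+\<^sub>1(S\<^sub>h\<^sub>+\<^sub>1)]\<close>,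
  the expectation taken under \<open>\<pi>\<^sup>*\<close>. The first term is the entropy gap between the maximum and
  the softmax average of \<open>Q\<^sup>*\<close>; the second holds because softmax weights of functions that are
  \<open>\<delta>\<close>-close differ at most by the factor \<open>exp (2 \<beta> \<delta>)\<close>, and \<open>Q\<^sup>\<pi>\<close> takes values in \<open>[0, H]\<close>.
  Unrolling this recursion along the trajectory of \<open>\<pi>\<^sup>*\<close> gives the bound.
\<close>

lemma
  assumes M: "prob_space M" "sets M = sets A"
    and K: "K \<in> measurable A (subprob_algebra N)"
    and K_prob: "\<And>x. x \<in> space A \<Longrightarrow> prob_space (K x)"
  shows prob_space_bind_kernel: "prob_space (M \<bind> K)"
    and sets_bind_kernel: "sets (M \<bind> K) = sets N"
proof -
  have K': "K \<in> measurable M (subprob_algebra N)"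
    using K M(2) by (simp cong: measurable_cong_sets)
  have "space M = space A" using M(2) by (rule sets_eq_imp_space_eq)
  then show "prob_space (M \<bind> K)"
    by (intro prob_space.prob_space_bind[OF M(1) _ K']) (auto intro: K_prob)
  show "sets (M \<bind> K) = sets N"
    by (rule sets_bind) (use sets_kernel[OF K'] prob_space.not_empty[OF M(1)] in auto)
qed

lemma integral_bind_kernel:
  fixes f :: "_ \<Rightarrow> real"
  assumes M: "prob_space M" "sets M = sets A" and K: "K \<in> measurable A (subprob_algebra N)"
    and f: "f \<in> borel_measurable N" "\<And>x. x \<in> space N \<Longrightarrow> \<bar>f x\<bar> \<le> B"
  shows "(\<integral>y. f y \<partial>(M \<bind> K)) = (\<integral>x. (\<integral>y. f y \<partial>K x) \<partial>M)"
proof -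
  have K': "K \<in> measurable M (subprob_algebra N)"
    using K M(2) by (simp cong: measurable_cong_sets)
  show ?thesis
  proof (rule integral_bind[OF f K'])
    show "finite_measure M" using M(1) by (simp add: prob_space_def)
    show "AE x in M. emeasure (K x) (space (K x)) \<le> ennreal 1"
      using K' by (auto intro!: AE_I2 subprob_space.subprob_emeasure_le_1 dest: subprob_space_kernel)
  qed
qed

lemma integrable_bounded_prob:
  fixes f :: "_ \<Rightarrow> real"
  assumes M: "prob_space M" "sets M = sets N"
    and f: "f \<in> borel_measurable N" "\<And>x. x \<in> space N \<Longrightarrow> \<bar>f x\<bar> \<le> B"
  shows "integrable M f"
proof -
  interpret prob_space M by (rule M(1))
  show ?thesis
  proof (rule integrable_const_bound[where B = B])
    show "f \<in> borel_measurable M"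
      using f(1) M(2) by (simp cong: measurable_cong_sets)
    show "AE x in M. norm (f x) \<le> B"
      using f(2) sets_eq_imp_space_eq[OF M(2)] by (intro AE_I2) auto
  qed
qed

lemma integral_mono_bounded_prob:
  fixes f g :: "_ \<Rightarrow> real"
  assumes M: "prob_space M" "sets M = sets N"
    and f: "f \<in> borel_measurable N" "\<And>x. x \<in> space N \<Longrightarrow> \<bar>f x\<bar> \<le> B"
    and g: "g \<in> borel_measurable N" "\<And>x. x \<in> space N \<Longrightarrow> \<bar>g x\<bar> \<le> B'"
    and le: "\<And>x. x \<in> space N \<Longrightarrow> f x \<le> g x"
  shows "(\<integral>x. f x \<partial>M) \<le> (\<integral>x. g x \<partial>M)"
  using le sets_eq_imp_space_eq[OF M(2)]
  by (intro integral_mono integrable_bounded_prob[OF M f] integrable_bounded_prob[OF M g]) auto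

lemma integral_bounds_prob:
  fixes f :: "_ \<Rightarrow> real"
  assumes M: "prob_space M" "sets M = sets N" and f: "f \<in> borel_measurable N"
    and lo: "\<And>x. x \<in> space N \<Longrightarrow> c \<le> f x" and hi: "\<And>x. x \<in> space N \<Longrightarrow> f x \<le> d"
  shows "c \<le> (\<integral>x. f x \<partial>M)" "(\<integral>x. f x \<partial>M) \<le> d"
proof -
  interpret prob_space M by (rule M(1))
  have "\<bar>f x\<bar> \<le> \<bar>c\<bar> + \<bar>d\<bar>" if "x \<in> space N" for x
    using lo[OF that] hi[OF that] by linarith
  then have "integrable M f" by (rule integrable_bounded_prob[OF M f])
  with lo hi sets_eq_imp_space_eq[OF M(2)]
  show "c \<le> (\<integral>x. f x \<partial>M)" "(\<integral>x. f x \<partial>M) \<le> d"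
    by (auto intro!: integral_ge_const integral_le_const)
qed

lemma integral_cong_sets:
  assumes "sets M = sets N" "\<And>x. x \<in> space N \<Longrightarrow> f x = g x"
  shows "(\<integral>x. f x \<partial>M) = (\<integral>x. g x \<partial>M)"
  using assms sets_eq_imp_space_eq[OF assms(1)] by (intro Bochner_Integration.integral_cong) auto

lemma pmf_expectation_le_Max:
  fixes f g :: "'a::finite \<Rightarrow> real"
  assumes "\<And>b. f b \<le> g b"
  shows "(\<Sum>b\<in>UNIV. pmf p b * f b) \<le> Max (range g)"
proof -
  have "f b \<le> Max (range g)" for b
    using assms[of b] by (simp add: Max_ge_iff) (meson UNIV_I)
  then have "(\<Sum>b\<in>UNIV. pmf p b * f b) \<le> (\<Sum>b\<in>UNIV. pmf p b * Max (range g))"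
    by (intro sum_mono mult_left_mono) (auto simp: pmf_nonneg)
  also have "\<dots> = Max (range g)"
    by (simp add: sum_distrib_right[symmetric] sum_pmf_eq_1)
  finally show ?thesis .
qed

lemma pmf_expectation_bounds:
  fixes f :: "'a::finite \<Rightarrow> real"
  assumes "\<And>b. lo \<le> f b" "\<And>b. f b \<le> hi"
  shows "lo \<le> (\<Sum>b\<in>UNIV. pmf p b * f b)" "(\<Sum>b\<in>UNIV. pmf p b * f b) \<le> hi"
proof -
  have "(\<Sum>b\<in>UNIV. pmf p b * lo) \<le> (\<Sum>b\<in>UNIV. pmf p b * f b)"
    "(\<Sum>b\<in>UNIV. pmf p b * f b) \<le> (\<Sum>b\<in>UNIV. pmf p b * hi)"
    by (intro sum_mono mult_left_mono; simp add: pmf_nonneg assms)+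
  then show "lo \<le> (\<Sum>b\<in>UNIV. pmf p b * f b)" "(\<Sum>b\<in>UNIV. pmf p b * f b) \<le> hi"
    by (simp_all add: sum_distrib_right[symmetric] sum_pmf_eq_1)
qed

lemma pmf_expectation_const: "(\<Sum>b\<in>(UNIV :: 'a::finite set). pmf p b * c) = c"
  by (simp add: sum_distrib_right[symmetric] sum_pmf_eq_1)

section \<open>Softmax distributions\<close>

definition softmax :: "real \<Rightarrow> ('a::finite \<Rightarrow> real) \<Rightarrow> 'a \<Rightarrow> real" where
  "softmax \<beta> x a = exp (\<beta> * x a) / (\<Sum>b\<in>UNIV. exp (\<beta> * x b))"

lemma sum_exp_pos: "0 < (\<Sum>b\<in>(UNIV :: 'a::finite set). exp (f b :: real))"
  by (rule sum_pos) auto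

lemma softmax_pos: "0 < softmax \<beta> x a"
  unfolding softmax_def using sum_exp_pos by (intro divide_pos_pos) auto

lemma sum_softmax: "(\<Sum>a\<in>UNIV. softmax \<beta> x a) = 1"
  unfolding softmax_def using sum_exp_pos[of "\<lambda>b. \<beta> * x b"]
  by (simp add: sum_divide_distrib[symmetric])

lemma pmf_softmax_policy: "pmf (softmax_policy \<beta> Q h s) a = softmax \<beta> (Q h s) a"
proof -
  have "(\<Sum>a\<in>UNIV. ennreal (softmax \<beta> (Q h s) a)) = ennreal (\<Sum>a\<in>UNIV. softmax \<beta> (Q h s) a)"
    by (rule sum_ennreal) (simp add: softmax_pos less_imp_le)
  then show ?thesis
    unfolding softmax_policy_def softmax_def[symmetric]
    by (subst pmf_embed_pmf)
       (simp_all add: softmax_pos less_imp_le nn_integral_count_space_finite sum_softmax)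
qed

lemma entropy_le_ln_card:
  fixes p :: "'a::finite \<Rightarrow> real"
  assumes pos: "\<And>a. 0 < p a" and sum1: "(\<Sum>a\<in>UNIV. p a) = 1"
  shows "- (\<Sum>a\<in>UNIV. p a * ln (p a)) \<le> ln (real CARD('a))"
proof -
  define n where "n = real CARD('a)"
  have n: "0 < n" unfolding n_def by simp
  have p_ne: "p a \<noteq> 0" for a using pos[of a] by simp
  have "(\<Sum>a\<in>UNIV. - (p a * ln (p a)) - p a * ln n) = (\<Sum>a\<in>UNIV. p a * ln (1 / (n * p a)))"
    using pos n p_ne by (intro sum.cong) (simp_all add: ln_div ln_mult field_simps)
  also have "\<dots> \<le> (\<Sum>a\<in>UNIV. p a * (1 / (n * p a) - 1))"
    using pos n by (intro sum_mono mult_left_mono ln_le_minus_one) (auto simp: less_imp_le)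
  also have "\<dots> = (\<Sum>a\<in>UNIV. 1 / n - p a)"
    using n p_ne by (intro sum.cong) (simp_all add: field_simps)
  also have "\<dots> = 0"
    using n sum1 by (simp add: sum_subtractf n_def)
  finally show ?thesis
    using sum1 by (simp add: sum_subtractf sum_negf sum_distrib_right[symmetric] n_def)
qed

lemma Max_minus_softmax_expectation_le:
  fixes x :: "'a::finite \<Rightarrow> real"
  assumes \<beta>: "0 < \<beta>"
  shows "Max (range x) - (\<Sum>a\<in>UNIV. softmax \<beta> x a * x a) \<le> ln (real CARD('a)) / \<beta>"
proof -
  define Z where "Z = (\<Sum>b\<in>UNIV. exp (\<beta> * x b))"
  have Z: "0 < Z" unfolding Z_def by (rule sum_exp_pos)
  text \<open>\<open>Max x \<le> ln Z / \<beta>\<close>, while the softmax average of \<open>x\<close> is \<open>(ln Z - entropy) / \<beta>\<close>.\<close>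
  have x_eq: "x a = (ln (softmax \<beta> x a) + ln Z) / \<beta>" for a
    using Z \<beta> unfolding softmax_def Z_def[symmetric] by (simp add: ln_div field_simps)
  have "(\<Sum>a\<in>UNIV. softmax \<beta> x a * x a)
      = (\<Sum>a\<in>UNIV. softmax \<beta> x a * ln (softmax \<beta> x a) + softmax \<beta> x a * ln Z) / \<beta>"
    by (subst sum_divide_distrib) (rule sum.cong, simp, subst x_eq, simp add: field_simps)
  also have "\<dots> = ((\<Sum>a\<in>UNIV. softmax \<beta> x a * ln (softmax \<beta> x a)) + ln Z) / \<beta>"
    by (simp add: sum.distrib sum_distrib_right[symmetric] sum_softmax)
  finally have E: "(\<Sum>a\<in>UNIV. softmax \<beta> x a * x a)
      = ((\<Sum>a\<in>UNIV. softmax \<beta> x a * ln (softmax \<beta> x a)) + ln Z) / \<beta>" .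
  have "Max (range x) \<in> range x" by (rule Max_in) auto
  then obtain a0 where a0: "Max (range x) = x a0" by (rule imageE)
  have "exp (\<beta> * x a0) \<le> Z"
    unfolding Z_def by (rule member_le_sum) auto
  then have "\<beta> * x a0 \<le> ln Z"
    using Z by (metis ln_exp ln_le_cancel_iff exp_gt_zero)
  then have M: "Max (range x) \<le> ln Z / \<beta>"
    using \<beta> a0 by (simp add: field_simps)
  have "- (\<Sum>a\<in>UNIV. softmax \<beta> x a * ln (softmax \<beta> x a)) \<le> ln (real CARD('a))"
    by (rule entropy_le_ln_card) (auto simp: softmax_pos sum_softmax)
  then have "- (\<Sum>a\<in>UNIV. softmax \<beta> x a * ln (softmax \<beta> x a)) / \<beta> \<le> ln (real CARD('a)) / \<beta>"
    using divide_right_mono[of _ _ \<beta>] \<beta> by (metis less_imp_le minus_divide_left)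
  moreover have "ln Z / \<beta> - ((\<Sum>a\<in>UNIV. softmax \<beta> x a * ln (softmax \<beta> x a)) + ln Z) / \<beta>
      = - (\<Sum>a\<in>UNIV. softmax \<beta> x a * ln (softmax \<beta> x a)) / \<beta>"
    using \<beta> by (simp add: field_simps)
  ultimately show ?thesis
    using M E by linarith
qed

lemma softmax_ratio_lower_bound:
  fixes x y :: "'a::finite \<Rightarrow> real"
  assumes \<beta>: "0 < \<beta>" and close: "\<And>a. \<bar>x a - y a\<bar> \<le> \<delta>"
  shows "exp (- (2 * \<beta> * \<delta>)) * softmax \<beta> x a \<le> softmax \<beta> y a"
proof -
  define Zx where "Zx = (\<Sum>b\<in>UNIV. exp (\<beta> * x b))"
  define Zy where "Zy = (\<Sum>b\<in>UNIV. exp (\<beta> * y b))"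
  have Zx: "0 < Zx" and Zy: "0 < Zy" unfolding Zx_def Zy_def by (rule sum_exp_pos)+
  have shift: "\<beta> * u \<le> \<beta> * \<delta> + \<beta> * v" if "\<bar>u - v\<bar> \<le> \<delta>" for u v
    using mult_left_mono[of "u - v" \<delta> \<beta>] that \<beta> by (simp add: abs_le_iff algebra_simps)
  have num: "exp (\<beta> * x a) * exp (- (\<beta> * \<delta>)) \<le> exp (\<beta> * y a)"
    using shift[of "x a" "y a"] close[of a] by (simp add: exp_add[symmetric])
  have den: "Zy \<le> exp (\<beta> * \<delta>) * Zx"
    unfolding Zx_def Zy_def sum_distrib_left
    using shift close by (intro sum_mono) (simp add: exp_add[symmetric] abs_minus_commute)
  have "exp (- (2 * \<beta> * \<delta>)) * softmax \<beta> x a = (exp (\<beta> * x a) * exp (- (\<beta> * \<delta>))) / (exp (\<beta> * \<delta>) * Zx)"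
    unfolding softmax_def Zx_def[symmetric] by (simp add: field_simps exp_add[symmetric] exp_diff)
  also have "\<dots> \<le> exp (\<beta> * y a) / Zy"
    using num den Zx Zy by (intro frac_le) auto
  finally show ?thesis unfolding softmax_def Zy_def .
qed

lemma softmax_expectation_diff_le:
  fixes x y g :: "'a::finite \<Rightarrow> real"
  assumes \<beta>: "0 < \<beta>" and g: "\<And>a. 0 \<le> g a" "\<And>a. g a \<le> C"
  shows "(\<Sum>a\<in>UNIV. (softmax \<beta> x a - softmax \<beta> y a) * g a)
    \<le> C * (2 * \<beta> * Max (range (\<lambda>a. \<bar>x a - y a\<bar>)))"
proof -
  define t where "t = 2 * \<beta> * Max (range (\<lambda>a. \<bar>x a - y a\<bar>))"
  define p where "p = softmax \<beta> x"
  define q where "q = softmax \<beta> y"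
  have t: "0 \<le> t"
    unfolding t_def using \<beta> by (intro mult_nonneg_nonneg order_trans[OF abs_ge_zero Max_ge]) auto
  have C: "0 \<le> C" using g[of undefined] by linarith
  have p: "0 \<le> p a" for a unfolding p_def by (rule less_imp_le[OF softmax_pos])
  have pq: "exp (- t) * p a \<le> q a" for a
    unfolding p_def q_def t_def by (rule softmax_ratio_lower_bound[OF \<beta>]) auto
  have "(\<Sum>a\<in>UNIV. (p a - q a) * g a) \<le> (\<Sum>a\<in>UNIV. (p a - min (p a) (q a)) * C)"
    using g by (intro sum_mono) (auto simp: min_def mult_left_mono mult_nonpos_nonneg)
  also have "\<dots> \<le> (\<Sum>a\<in>UNIV. (p a - exp (- t) * p a) * C)"
    using pq p t C by (intro sum_mono mult_right_mono) (auto simp: mult_left_le_one_le)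
  also have "\<dots> = (1 - exp (- t)) * C"
    using sum_softmax[of \<beta> x] unfolding p_def
    by (simp add: sum_distrib_right[symmetric] sum_subtractf sum_distrib_left[symmetric] algebra_simps)
  also have "\<dots> \<le> t * C"
    using exp_ge_add_one_self[of "- t"] C by (intro mult_right_mono) linarith+
  finally show ?thesis unfolding p_def q_def t_def by (simp add: algebra_simps)
qed


section \<open>Measurability on states and state-action pairs\<close>

lemma space_SM [simp]: "space (SM SS) = SS"
  by (simp add: SM_def space_restrict_space)

lemma space_SAM [simp]: "space (SAM SS) = SS \<times> UNIV"
  by (simp add: SAM_def space_pair_measure)

lemma measurable_SAM_uncurry:
  fixes F :: "'s::topological_space \<Rightarrow> 'a::countable \<Rightarrow> real"
  assumes "\<And>a. (\<lambda>s. F s a) \<in> borel_measurable (SM SS)"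
  shows "(\<lambda>x. F (fst x) (snd x)) \<in> borel_measurable (SAM SS)"
  unfolding SAM_def
  by (rule measurable_compose_countable[where f = "\<lambda>a x. F (fst x) a"])
     (auto intro: measurable_compose[OF measurable_fst assms])

lemma measurable_SAM_slice:
  fixes f :: "'s::topological_space \<times> 'a \<Rightarrow> real"
  assumes "f \<in> borel_measurable (SAM SS)"
  shows "(\<lambda>s. f (s, a)) \<in> borel_measurable (SM SS)"
  using assms unfolding SAM_def by measurable

lemma measurable_SAM_fst:
  fixes g :: "'s::topological_space \<Rightarrow> real"
  assumes "g \<in> borel_measurable (SM SS)"
  shows "(\<lambda>x. g (fst x)) \<in> borel_measurable (SAM SS)"
  using measurable_compose[OF _ assms, of fst "SAM SS"] unfolding SAM_def by simp

lemma measurable_Pair_SAM: "(\<lambda>s. (s, a)) \<in> measurable (SM SS) (SAM SS)"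
  unfolding SAM_def by measurable

lemma measurable_Max_actions:
  fixes F :: "'s::topological_space \<Rightarrow> 'a::finite \<Rightarrow> real"
  assumes "(\<lambda>x. F (fst x) (snd x)) \<in> borel_measurable (SAM SS)"
  shows "(\<lambda>s. Max (range (F s))) \<in> borel_measurable (SM SS)"
  using measurable_SAM_slice[OF assms] by (intro borel_measurable_Max) auto

lemma measurable_pmf_expectation:
  fixes F :: "'s::topological_space \<Rightarrow> 'a::finite \<Rightarrow> real"
  assumes "(\<lambda>x. F (fst x) (snd x)) \<in> borel_measurable (SAM SS)"
    and "\<And>b. (\<lambda>s. pmf (p s) b) \<in> borel_measurable (SM SS)"
  shows "(\<lambda>s. \<Sum>b\<in>UNIV. pmf (p s) b * F s b) \<in> borel_measurable (SM SS)"
  using measurable_SAM_slice[OF assms(1)] assms(2)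
  by (intro borel_measurable_sum borel_measurable_times) auto

section \<open>Finite-horizon Bellman recursions\<close>

text \<open>Recursion on the number \<open>n\<close> of remaining steps; step \<open>h\<close> has \<open>Suc H - h\<close> of them.\<close>

fun bellman_opt :: "(nat \<Rightarrow> 's \<Rightarrow> 'a \<Rightarrow> 's measure) \<Rightarrow> (nat \<Rightarrow> 's \<Rightarrow> 'a \<Rightarrow> real)
    \<Rightarrow> nat \<Rightarrow> nat \<Rightarrow> 's \<Rightarrow> 'a::finite \<Rightarrow> real" where
  "bellman_opt P r 0 h s a = 0"
| "bellman_opt P r (Suc n) h s a =
     r h s a + (\<integral>s'. Max (range (bellman_opt P r n (Suc h) s')) \<partial>P h s a)"

fun bellman_eval :: "(nat \<Rightarrow> 's \<Rightarrow> 'a \<Rightarrow> 's measure) \<Rightarrow> (nat \<Rightarrow> 's \<Rightarrow> 'a \<Rightarrow> real)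
    \<Rightarrow> (nat \<Rightarrow> 's \<Rightarrow> 'a pmf) \<Rightarrow> nat \<Rightarrow> nat \<Rightarrow> 's \<Rightarrow> 'a::finite \<Rightarrow> real" where
  "bellman_eval P r \<pi> 0 h s a = 0"
| "bellman_eval P r \<pi> (Suc n) h s a =
     r h s a + (\<integral>s'. (\<Sum>b\<in>UNIV. pmf (\<pi> (Suc h) s') b * bellman_eval P r \<pi> n (Suc h) s' b) \<partial>P h s a)"

lemma bellman_opt_zero [simp]: "bellman_opt P r 0 h s = (\<lambda>_. 0)"
  by (rule ext) simp

locale mdp =
  fixes SS :: "'s::euclidean_space set" and H :: nat
    and P :: "nat \<Rightarrow> 's \<Rightarrow> 'a::finite \<Rightarrow> 's measure"
    and r :: "nat \<Rightarrow> 's \<Rightarrow> 'a \<Rightarrow> real" and \<mu> :: "'s measure"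
  assumes mdp: "is_mdp SS H P r \<mu>"
begin

abbreviation Qopt :: "nat \<Rightarrow> 's \<Rightarrow> 'a \<Rightarrow> real" where
  "Qopt h \<equiv> bellman_opt P r (Suc H - h) h"

abbreviation Qeval :: "(nat \<Rightarrow> 's \<Rightarrow> 'a pmf) \<Rightarrow> nat \<Rightarrow> 's \<Rightarrow> 'a \<Rightarrow> real" where
  "Qeval \<pi> h \<equiv> bellman_eval P r \<pi> (Suc H - h) h"

lemma prob_space_mu: "prob_space \<mu>" and sets_mu: "sets \<mu> = sets (SM SS)"
  using mdp by (auto simp: is_mdp_def)

lemma prob_space_P: "h \<in> {1..H} \<Longrightarrow> s \<in> SS \<Longrightarrow> prob_space (P h s a)"
  and sets_P: "h \<in> {1..H} \<Longrightarrow> s \<in> SS \<Longrightarrow> sets (P h s a) = sets (SM SS)"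
  using mdp by (auto simp: is_mdp_def)

lemma measurable_P:
  "h \<in> {1..H} \<Longrightarrow> (\<lambda>x. P h (fst x) (snd x)) \<in> measurable (SAM SS) (subprob_algebra (SM SS))"
  using mdp by (auto simp: is_mdp_def case_prod_beta')

lemma reward_bounds: "h \<in> {1..H} \<Longrightarrow> s \<in> SS \<Longrightarrow> 0 \<le> r h s a \<and> r h s a \<le> 1"
  using mdp by (auto simp: is_mdp_def)

lemma abs_reward_le: "h \<in> {1..H} \<Longrightarrow> x \<in> space (SAM SS) \<Longrightarrow> \<bar>r h (fst x) (snd x)\<bar> \<le> 1"
  using reward_bounds[of h "fst x" "snd x"] by auto

lemma measurable_reward: "h \<in> {1..H} \<Longrightarrow> (\<lambda>x. r h (fst x) (snd x)) \<in> borel_measurable (SAM SS)"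
  using mdp unfolding is_mdp_def
  by (intro measurable_SAM_uncurry) (auto simp: SM_def intro: borel_measurable_continuous_on_restrict)

lemma measurable_integral_P:
  fixes g :: "'s \<Rightarrow> real"
  assumes "h \<in> {1..H}" "g \<in> borel_measurable (SM SS)"
  shows "(\<lambda>x. \<integral>s'. g s' \<partial>P h (fst x) (snd x)) \<in> borel_measurable (SAM SS)"
  using measurable_compose[OF measurable_P[OF assms(1)] integral_measurable_subprob_algebra[OF assms(2)]]
  by simp

lemma integral_P_bounds:
  fixes g :: "'s \<Rightarrow> real"
  assumes "h \<in> {1..H}" "s \<in> SS" "g \<in> borel_measurable (SM SS)"
    "\<And>x. x \<in> SS \<Longrightarrow> c \<le> g x" "\<And>x. x \<in> SS \<Longrightarrow> g x \<le> d"
  shows "c \<le> (\<integral>s'. g s' \<partial>P h s a)" "(\<integral>s'. g s' \<partial>P h s a) \<le> d"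
  by (rule integral_bounds_prob[OF prob_space_P[OF assms(1,2)] sets_P[OF assms(1,2)] assms(3)],
      use assms(4,5) in auto)+

lemma bellman_opt_measurable_bounded:
  "n + h = Suc H \<Longrightarrow> 1 \<le> h \<Longrightarrow>
     (\<lambda>x. bellman_opt P r n h (fst x) (snd x)) \<in> borel_measurable (SAM SS)
     \<and> (\<forall>s\<in>SS. \<forall>a. 0 \<le> bellman_opt P r n h s a \<and> bellman_opt P r n h s a \<le> real n)"
proof (induction n arbitrary: h)
  case 0
  then show ?case by simp
next
  case (Suc n)
  then have IH: "(\<lambda>x. bellman_opt P r n (Suc h) (fst x) (snd x)) \<in> borel_measurable (SAM SS)"
    "\<And>s a. s \<in> SS \<Longrightarrow> 0 \<le> bellman_opt P r n (Suc h) s a \<and> bellman_opt P r n (Suc h) s a \<le> real n"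
    by auto
  have h: "h \<in> {1..H}" using Suc.prems by auto
  have V_meas: "(\<lambda>s. Max (range (bellman_opt P r n (Suc h) s))) \<in> borel_measurable (SM SS)"
    by (rule measurable_Max_actions[OF IH(1)])
  have V_bounds: "0 \<le> Max (range (bellman_opt P r n (Suc h) s))"
    "Max (range (bellman_opt P r n (Suc h) s)) \<le> real n" if "s \<in> SS" for s
    using IH(2)[OF that] by (auto simp: Max_ge_iff Max_le_iff)
  have "0 \<le> bellman_opt P r (Suc n) h s a \<and> bellman_opt P r (Suc n) h s a \<le> real (Suc n)"
    if "s \<in> SS" for s a
    using integral_P_bounds[OF h that V_meas, of 0 "real n" a] V_bounds reward_bounds[OF h that, of a]
    by auto
  moreover have "(\<lambda>x. bellman_opt P r (Suc n) h (fst x) (snd x)) \<in> borel_measurable (SAM SS)"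
    using measurable_reward[OF h] measurable_integral_P[OF h V_meas] by simp
  ultimately show ?case by blast
qed

lemma measurable_Qopt: "h \<in> {1..H} \<Longrightarrow> (\<lambda>x. Qopt h (fst x) (snd x)) \<in> borel_measurable (SAM SS)"
  using bellman_opt_measurable_bounded[of "Suc H - h" h] by auto

lemma Qopt_bounds:
  assumes "h \<in> {1..H}" "s \<in> SS"
  shows "0 \<le> Qopt h s a \<and> Qopt h s a \<le> real H"
proof -
  have "0 \<le> Qopt h s a \<and> Qopt h s a \<le> real (Suc H - h)"
    using bellman_opt_measurable_bounded[of "Suc H - h" h] assms by auto
  moreover have "real (Suc H - h) \<le> real H" using assms by auto
  ultimately show ?thesis by linarith
qed

lemma Qeval_eq_Qopt_if_greedy:
  assumes greedy: "\<And>k s. k \<in> {2..H} \<Longrightarrow> s \<in> SS \<Longrightarrow>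
      (\<Sum>b\<in>UNIV. pmf (\<pi> k s) b * Qopt k s b) = Max (range (Qopt k s))"
    and "h \<in> {1..H}" "s \<in> SS"
  shows "Qeval \<pi> h s a = Qopt h s a"
proof -
  have "bellman_eval P r \<pi> n h s a = bellman_opt P r n h s a"
    if "n + h = Suc H" "1 \<le> h" "s \<in> SS" for n h s a
    using that
  proof (induction n arbitrary: h s a)
    case 0
    then show ?case by simp
  next
    case (Suc n)
    have h: "h \<in> {1..H}" using Suc.prems by auto
    have "(\<Sum>b\<in>UNIV. pmf (\<pi> (Suc h) s') b * bellman_eval P r \<pi> n (Suc h) s' b)
        = Max (range (bellman_opt P r n (Suc h) s'))" if "s' \<in> SS" for s'
    proof (cases "n = 0")
      case True
      then show ?thesis by simp
    next
      case False
      then have "Suc h \<in> {2..H}" "Suc H - Suc h = n" using Suc.prems by auto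
      then show ?thesis using greedy[of "Suc h" s'] Suc.IH[of "Suc h" s'] Suc.prems that by simp
    qed
    then have "(\<integral>s'. (\<Sum>b\<in>UNIV. pmf (\<pi> (Suc h) s') b * bellman_eval P r \<pi> n (Suc h) s' b) \<partial>P h s a)
        = (\<integral>s'. Max (range (bellman_opt P r n (Suc h) s')) \<partial>P h s a)"
      by (intro integral_cong_sets[OF sets_P[OF h Suc.prems(3)]]) simp
    then show ?case by simp
  qed
  with assms(2,3) show ?thesis by simp
qed

end

locale mdp_policy = mdp SS H P r \<mu> for SS :: "'s::euclidean_space set" and H :: nat
    and P :: "nat \<Rightarrow> 's \<Rightarrow> 'a::finite \<Rightarrow> 's measure"
    and r :: "nat \<Rightarrow> 's \<Rightarrow> 'a \<Rightarrow> real" and \<mu> :: "'s measure" +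
  fixes \<pi> :: "nat \<Rightarrow> 's \<Rightarrow> 'a pmf"
  assumes policy: "is_policy SS H \<pi>"
begin

lemma measurable_pmf_policy: "h \<in> {1..H} \<Longrightarrow> (\<lambda>s. pmf (\<pi> h s) b) \<in> borel_measurable (SM SS)"
  using policy by (auto simp: is_policy_def)

lemma measurable_policy_expectation:
  fixes F :: "'s \<Rightarrow> 'a \<Rightarrow> real"
  assumes "(\<lambda>x. F (fst x) (snd x)) \<in> borel_measurable (SAM SS)" "h \<in> {1..H}"
  shows "(\<lambda>s. \<Sum>b\<in>UNIV. pmf (\<pi> h s) b * F s b) \<in> borel_measurable (SM SS)"
  by (rule measurable_pmf_expectation[OF assms(1) measurable_pmf_policy[OF assms(2)]])

lemma prob_space_act_kernel: "s \<in> SS \<Longrightarrow> prob_space (act_kernel SS \<pi> h s)"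
  unfolding act_kernel_def by (rule prob_space.prob_space_distr) (auto simp: measure_pmf.prob_space_axioms)

lemma sets_act_kernel [simp]: "sets (act_kernel SS \<pi> h s) = sets (SAM SS)"
  unfolding act_kernel_def by simp

lemma integral_act_kernel:
  assumes "s \<in> SS" "f \<in> borel_measurable (SAM SS)"
  shows "(\<integral>x. f x \<partial>act_kernel SS \<pi> h s) = (\<Sum>b\<in>UNIV. pmf (\<pi> h s) b * f (s, b))"
  unfolding act_kernel_def using assms
  by (subst integral_distr) (auto simp: integral_measure_pmf[where A = UNIV] measurable_Pair_SAM)

lemma emeasure_act_kernel:
  assumes "s \<in> SS" "A \<in> sets (SAM SS)"
  shows "emeasure (act_kernel SS \<pi> h s) A = ennreal (\<Sum>b\<in>UNIV. pmf (\<pi> h s) b * indicator A (s, b))"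
proof -
  have "emeasure (act_kernel SS \<pi> h s) A = emeasure (measure_pmf (\<pi> h s)) {b. (s, b) \<in> A}"
    unfolding act_kernel_def using assms by (subst emeasure_distr) (auto simp: vimage_def)
  also have "\<dots> = ennreal (\<Sum>b\<in>{b. (s, b) \<in> A}. pmf (\<pi> h s) b)"
    by (subst emeasure_measure_pmf_finite) auto
  also have "(\<Sum>b\<in>{b. (s, b) \<in> A}. pmf (\<pi> h s) b) = (\<Sum>b\<in>UNIV. pmf (\<pi> h s) b * indicator A (s, b))"
    by (rule sum.mono_neutral_cong_left) (auto simp: indicator_def)
  finally show ?thesis .
qed

lemma measurable_act_kernel:
  assumes h: "h \<in> {1..H}"
  shows "act_kernel SS \<pi> h \<in> measurable (SM SS) (subprob_algebra (SAM SS))"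
proof (rule measurable_subprob_algebra)
  fix s assume "s \<in> space (SM SS)"
  then show "subprob_space (act_kernel SS \<pi> h s)"
    by (simp add: prob_space_imp_subprob_space prob_space_act_kernel)
next
  fix A :: "('s \<times> 'a) set" assume A: "A \<in> sets (SAM SS)"
  have "(\<lambda>s. indicator A (s, b) :: real) \<in> borel_measurable (SM SS)" for b
    using A measurable_Pair_SAM by measurable
  then have "(\<lambda>s. ennreal (\<Sum>b\<in>UNIV. pmf (\<pi> h s) b * indicator A (s, b))) \<in> borel_measurable (SM SS)"
    using measurable_pmf_policy[OF h] by measurable
  then show "(\<lambda>s. emeasure (act_kernel SS \<pi> h s) A) \<in> borel_measurable (SM SS)"
    by (rule measurable_cong[THEN iffD1, rotated]) (use A in \<open>auto simp: emeasure_act_kernel\<close>)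
qed auto

lemma step_kernel_eq: "step_kernel SS P \<pi> h = (\<lambda>x. P h (fst x) (snd x) \<bind> act_kernel SS \<pi> (Suc h))"
  unfolding step_kernel_def by (auto simp: case_prod_beta')

lemma measurable_step_kernel:
  assumes "h \<in> {1..<H}"
  shows "step_kernel SS P \<pi> h \<in> measurable (SAM SS) (subprob_algebra (SAM SS))"
  unfolding step_kernel_eq using assms
  by (intro measurable_bind2[OF measurable_P measurable_act_kernel]) auto

lemma
  assumes "h \<in> {1..<H}" "x \<in> space (SAM SS)"
  shows prob_space_step_kernel: "prob_space (step_kernel SS P \<pi> h x)"
    and sets_step_kernel: "sets (step_kernel SS P \<pi> h x) = sets (SAM SS)"
proof -
  have "h \<in> {1..H}" "fst x \<in> SS" "Suc h \<in> {1..H}" using assms by auto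
  note P = prob_space_P[OF this(1,2)] sets_P[OF this(1,2)] and K = measurable_act_kernel[OF this(3)]
  have K_prob: "\<And>s. s \<in> space (SM SS) \<Longrightarrow> prob_space (act_kernel SS \<pi> (Suc h) s)"
    by (simp add: prob_space_act_kernel)
  show "prob_space (step_kernel SS P \<pi> h x)" "sets (step_kernel SS P \<pi> h x) = sets (SAM SS)"
    unfolding step_kernel_eq
    using prob_space_bind_kernel[OF P K K_prob] sets_bind_kernel[OF P K K_prob] by auto
qed

lemma integral_step_kernel:
  fixes f :: "'s \<times> 'a \<Rightarrow> real"
  assumes h: "h \<in> {1..<H}" and s: "s \<in> SS"
    and f: "f \<in> borel_measurable (SAM SS)" "\<And>x. x \<in> space (SAM SS) \<Longrightarrow> \<bar>f x\<bar> \<le> B"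
  shows "(\<integral>x. f x \<partial>step_kernel SS P \<pi> h (s, a))
       = (\<integral>s'. (\<Sum>b\<in>UNIV. pmf (\<pi> (Suc h) s') b * f (s', b)) \<partial>P h s a)"
proof -
  have h': "h \<in> {1..H}" "Suc h \<in> {1..H}" using h by auto
  have "(\<integral>x. f x \<partial>step_kernel SS P \<pi> h (s, a)) = (\<integral>x. f x \<partial>(P h s a \<bind> act_kernel SS \<pi> (Suc h)))"
    by (simp add: step_kernel_eq)
  also have "\<dots> = (\<integral>s'. (\<integral>x. f x \<partial>act_kernel SS \<pi> (Suc h) s') \<partial>P h s a)"
    by (rule integral_bind_kernel[OF prob_space_P[OF h'(1) s] sets_P[OF h'(1) s]
          measurable_act_kernel[OF h'(2)] f])
  also have "\<dots> = (\<integral>s'. (\<Sum>b\<in>UNIV. pmf (\<pi> (Suc h) s') b * f (s', b)) \<partial>P h s a)"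
    by (intro integral_cong_sets[OF sets_P[OF h'(1) s]]) (simp add: integral_act_kernel f(1))
  finally show ?thesis .
qed

lemma measurable_integral_step_kernel:
  fixes f :: "'s \<times> 'a \<Rightarrow> real"
  assumes "h \<in> {1..<H}" "f \<in> borel_measurable (SAM SS)"
  shows "(\<lambda>x. \<integral>y. f y \<partial>step_kernel SS P \<pi> h x) \<in> borel_measurable (SAM SS)"
  using measurable_compose[OF measurable_step_kernel[OF assms(1)]
      integral_measurable_subprob_algebra[OF assms(2)]]
  by simp

lemma abs_integral_step_kernel_le:
  fixes f :: "'s \<times> 'a \<Rightarrow> real"
  assumes "h \<in> {1..<H}" "x \<in> space (SAM SS)" "f \<in> borel_measurable (SAM SS)"
    and "\<And>y. y \<in> space (SAM SS) \<Longrightarrow> \<bar>f y\<bar> \<le> B"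
  shows "\<bar>\<integral>y. f y \<partial>step_kernel SS P \<pi> h x\<bar> \<le> B"
  using integral_bounds_prob[OF prob_space_step_kernel[OF assms(1,2)] sets_step_kernel[OF assms(1,2)]
      assms(3), of "- B" B] assms(4)
  by (fastforce simp: abs_le_iff)

lemma
  assumes D: "prob_space D" "sets D = sets (SAM SS)" and "1 \<le> h0" "h0 + n \<le> H"
  shows prob_space_occ: "prob_space (occ SS P \<pi> h0 D n)"
    and sets_occ: "sets (occ SS P \<pi> h0 D n) = sets (SAM SS)"
proof -
  have "prob_space (occ SS P \<pi> h0 D n) \<and> sets (occ SS P \<pi> h0 D n) = sets (SAM SS)"
    using assms(3,4)
  proof (induction n)
    case 0
    then show ?case using D by simp
  next
    case (Suc n)
    then have O: "prob_space (occ SS P \<pi> h0 D n)" "sets (occ SS P \<pi> h0 D n) = sets (SAM SS)"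
      and k: "h0 + n \<in> {1..<H}" by auto
    show ?case
      using prob_space_bind_kernel[OF O measurable_step_kernel[OF k] prob_space_step_kernel[OF k]]
        sets_bind_kernel[OF O measurable_step_kernel[OF k] prob_space_step_kernel[OF k]]
      by simp
  qed
  then show "prob_space (occ SS P \<pi> h0 D n)" "sets (occ SS P \<pi> h0 D n) = sets (SAM SS)"
    by auto
qed

lemma integral_occ_Suc:
  fixes f :: "'s \<times> 'a \<Rightarrow> real"
  assumes D: "prob_space D" "sets D = sets (SAM SS)" and "1 \<le> h0" "h0 + Suc n \<le> H"
    and f: "f \<in> borel_measurable (SAM SS)" "\<And>x. x \<in> space (SAM SS) \<Longrightarrow> \<bar>f x\<bar> \<le> B"
  shows "(\<integral>x. f x \<partial>occ SS P \<pi> h0 D (Suc n))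
       = (\<integral>x. (\<integral>y. f y \<partial>step_kernel SS P \<pi> (h0 + n) x) \<partial>occ SS P \<pi> h0 D n)"
proof -
  have k: "h0 + n \<in> {1..<H}" using assms by auto
  show ?thesis
    unfolding occ.simps
    by (rule integral_bind_kernel[OF prob_space_occ[OF D] sets_occ[OF D] measurable_step_kernel[OF k] f])
       (use assms in auto)
qed

lemma sum_integral_occ_telescope:
  fixes U :: "nat \<Rightarrow> 's \<times> 'a \<Rightarrow> real"
  assumes D: "prob_space D" "sets D = sets (SAM SS)" and h0: "h0 \<in> {1..H}"
    and U_meas: "\<And>k. k \<in> {h0..H} \<Longrightarrow> U k \<in> borel_measurable (SAM SS)"
    and U_bounded: "\<And>k x. k \<in> {h0..H} \<Longrightarrow> x \<in> space (SAM SS) \<Longrightarrow> \<bar>U k x\<bar> \<le> B"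
    and U_step: "\<And>k x. k \<in> {h0..<H} \<Longrightarrow> x \<in> space (SAM SS) \<Longrightarrow>
        U k x = r k (fst x) (snd x) + (\<integral>y. U (Suc k) y \<partial>step_kernel SS P \<pi> k x)"
    and U_last: "\<And>x. x \<in> space (SAM SS) \<Longrightarrow> U H x = r H (fst x) (snd x)"
  shows "(\<Sum>k = h0..H. \<integral>x. r k (fst x) (snd x) \<partial>occ SS P \<pi> h0 D (k - h0)) = (\<integral>x. U h0 x \<partial>D)"
proof -
  let ?R = "\<lambda>k. \<integral>x. r k (fst x) (snd x) \<partial>occ SS P \<pi> h0 D (k - h0)"
  have "(\<Sum>k = h0 + n..H. ?R k) = (\<integral>x. U (h0 + n) x \<partial>occ SS P \<pi> h0 D n)" if "h0 + n \<le> H" for n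
    using that
  proof (induction "H - (h0 + n)" arbitrary: n)
    case 0
    then have n: "h0 + n = H" "n = H - h0" by auto
    have "(\<integral>x. U H x \<partial>occ SS P \<pi> h0 D n) = (\<integral>x. r H (fst x) (snd x) \<partial>occ SS P \<pi> h0 D n)"
      using sets_occ[OF D, of h0 n] h0 n U_last by (intro integral_cong_sets) auto
    then show ?case using n by simp
  next
    case (Suc m)
    define k where "k = h0 + n"
    have k: "k \<in> {h0..<H}" "k \<in> {1..<H}" "Suc k \<in> {h0..H}" using Suc.prems Suc.hyps(2) h0 by (auto simp: k_def)
    note O = prob_space_occ[OF D, of h0 n] sets_occ[OF D, of h0 n]
    have O': "prob_space (occ SS P \<pi> h0 D n)" "sets (occ SS P \<pi> h0 D n) = sets (SAM SS)"
      using O h0 k by (auto simp: k_def)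
    have r_int: "integrable (occ SS P \<pi> h0 D n) (\<lambda>x. r k (fst x) (snd x))"
      using k by (intro integrable_bounded_prob[OF O' measurable_reward abs_reward_le]) auto
    have step_int: "integrable (occ SS P \<pi> h0 D n) (\<lambda>x. \<integral>y. U (Suc k) y \<partial>step_kernel SS P \<pi> k x)"
      using k U_meas U_bounded
      by (intro integrable_bounded_prob[OF O' measurable_integral_step_kernel
            abs_integral_step_kernel_le[where B = B]]) auto
    have "(\<Sum>j = k..H. ?R j) = ?R k + (\<Sum>j = Suc k..H. ?R j)"
      using k by (intro sum.atLeast_Suc_atMost) auto
    also have "(\<Sum>j = Suc k..H. ?R j) = (\<integral>x. U (Suc k) x \<partial>occ SS P \<pi> h0 D (Suc n))"
      using Suc.hyps(1)[of "Suc n"] Suc.hyps(2) k by (simp add: k_def)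
    also have "\<dots> = (\<integral>x. (\<integral>y. U (Suc k) y \<partial>step_kernel SS P \<pi> k x) \<partial>occ SS P \<pi> h0 D n)"
      using k h0 U_meas U_bounded
      by (subst integral_occ_Suc[OF D, where B = B]) (auto simp: k_def)
    also have "?R k + \<dots> = (\<integral>x. r k (fst x) (snd x) + (\<integral>y. U (Suc k) y \<partial>step_kernel SS P \<pi> k x)
        \<partial>occ SS P \<pi> h0 D n)"
      using r_int step_int by (simp add: k_def)
    also have "\<dots> = (\<integral>x. U k x \<partial>occ SS P \<pi> h0 D n)"
      using U_step k by (intro integral_cong_sets[OF O'(2)]) auto
    finally show ?case by (simp add: k_def)
  qed
  from this[of 0] h0 show ?thesis by simp
qed

lemma bellman_eval_measurable_bounded:
  "n + h = Suc H \<Longrightarrow> 1 \<le> h \<Longrightarrow>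
     (\<lambda>x. bellman_eval P r \<pi> n h (fst x) (snd x)) \<in> borel_measurable (SAM SS)
     \<and> (\<forall>s\<in>SS. \<forall>a. 0 \<le> bellman_eval P r \<pi> n h s a \<and> bellman_eval P r \<pi> n h s a \<le> real n)"
proof (induction n arbitrary: h)
  case 0
  then show ?case by simp
next
  case (Suc n)
  have h: "h \<in> {1..H}" using Suc.prems by auto
  show ?case
  proof (cases "n = 0")
    case True
    then show ?thesis using measurable_reward[OF h] reward_bounds[OF h] by simp
  next
    case False
    then have h': "Suc h \<in> {1..H}" using Suc.prems by auto
    from Suc have IH: "(\<lambda>x. bellman_eval P r \<pi> n (Suc h) (fst x) (snd x)) \<in> borel_measurable (SAM SS)"
      "\<And>s a. s \<in> SS \<Longrightarrow> 0 \<le> bellman_eval P r \<pi> n (Suc h) s a \<and> bellman_eval P r \<pi> n (Suc h) s a \<le> real n"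
      by auto
    have V_meas: "(\<lambda>s. \<Sum>b\<in>UNIV. pmf (\<pi> (Suc h) s) b * bellman_eval P r \<pi> n (Suc h) s b)
        \<in> borel_measurable (SM SS)"
      by (rule measurable_policy_expectation[OF IH(1) h'])
    have V_bounds: "0 \<le> (\<Sum>b\<in>UNIV. pmf (\<pi> (Suc h) s) b * bellman_eval P r \<pi> n (Suc h) s b)"
      "(\<Sum>b\<in>UNIV. pmf (\<pi> (Suc h) s) b * bellman_eval P r \<pi> n (Suc h) s b) \<le> real n"
      if "s \<in> SS" for s
      using pmf_expectation_bounds[of 0 "bellman_eval P r \<pi> n (Suc h) s" "real n"] IH(2)[OF that] by auto
    have "0 \<le> bellman_eval P r \<pi> (Suc n) h s a \<and> bellman_eval P r \<pi> (Suc n) h s a \<le> real (Suc n)"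
      if "s \<in> SS" for s a
      using integral_P_bounds[OF h that V_meas, of 0 "real n" a] V_bounds reward_bounds[OF h that, of a]
      by auto
    moreover have "(\<lambda>x. bellman_eval P r \<pi> (Suc n) h (fst x) (snd x)) \<in> borel_measurable (SAM SS)"
      using measurable_reward[OF h] measurable_integral_P[OF h V_meas] by simp
    ultimately show ?thesis by blast
  qed
qed

lemma measurable_Qeval: "h \<in> {1..H} \<Longrightarrow> (\<lambda>x. Qeval \<pi> h (fst x) (snd x)) \<in> borel_measurable (SAM SS)"
  using bellman_eval_measurable_bounded[of "Suc H - h" h] by auto

lemma Qeval_bounds:
  assumes "h \<in> {1..H}" "s \<in> SS"
  shows "0 \<le> Qeval \<pi> h s a \<and> Qeval \<pi> h s a \<le> real H"
proof -
  have "0 \<le> Qeval \<pi> h s a \<and> Qeval \<pi> h s a \<le> real (Suc H - h)"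
    using bellman_eval_measurable_bounded[of "Suc H - h" h] assms by auto
  moreover have "real (Suc H - h) \<le> real H" using assms by auto
  ultimately show ?thesis by linarith
qed

lemma abs_Qeval_le: "h \<in> {1..H} \<Longrightarrow> x \<in> space (SAM SS) \<Longrightarrow> \<bar>Qeval \<pi> h (fst x) (snd x)\<bar> \<le> real H"
  using Qeval_bounds[of h "fst x" "snd x"] by auto

lemma Qeval_step:
  assumes h: "h \<in> {1..<H}" and x: "x \<in> space (SAM SS)"
  shows "Qeval \<pi> h (fst x) (snd x)
    = r h (fst x) (snd x) + (\<integral>y. Qeval \<pi> (Suc h) (fst y) (snd y) \<partial>step_kernel SS P \<pi> h x)"
proof -
  obtain s a where x: "x = (s, a)" "s \<in> SS" using x by auto
  have h': "Suc h \<in> {1..H}" using h by auto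
  show ?thesis
    using h x integral_step_kernel[OF h x(2) measurable_Qeval[OF h'] abs_Qeval_le[OF h']]
    by (simp add: Suc_diff_le)
qed

lemma Qpi_eq_Qeval:
  assumes h: "h \<in> {1..H}" and s: "s \<in> SS"
  shows "Qpi SS H P r \<pi> h s a = Qeval \<pi> h s a"
proof -
  have x: "(s, a) \<in> space (SAM SS)" using s by simp
  have "Qpi SS H P r \<pi> h s a = (\<integral>x. Qeval \<pi> h (fst x) (snd x) \<partial>return (SAM SS) (s, a))"
    unfolding Qpi_def
  proof (rule sum_integral_occ_telescope[where U = "\<lambda>k x. Qeval \<pi> k (fst x) (snd x)" and B = "real H",
        OF prob_space_return[OF x] sets_return h])
    fix k :: nat and x :: "'s \<times> 'a" assume "k \<in> {h..<H}" "x \<in> space (SAM SS)"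
    then show "Qeval \<pi> k (fst x) (snd x)
        = r k (fst x) (snd x) + (\<integral>y. Qeval \<pi> (Suc k) (fst y) (snd y) \<partial>step_kernel SS P \<pi> k x)"
      using h by (intro Qeval_step) auto
  qed (use h in \<open>auto intro: measurable_Qeval abs_Qeval_le\<close>)
  also have "\<dots> = Qeval \<pi> h s a"
    using integral_return[OF x measurable_Qeval[OF h]] by simp
  finally show ?thesis .
qed

lemma
  assumes "1 \<le> H"
  shows prob_space_init_dist: "prob_space (init_dist SS \<mu> \<pi>)"
    and sets_init_dist: "sets (init_dist SS \<mu> \<pi>) = sets (SAM SS)"
proof -
  have K: "act_kernel SS \<pi> 1 \<in> measurable (SM SS) (subprob_algebra (SAM SS))"
    using assms by (intro measurable_act_kernel) auto
  have K_prob: "\<And>s. s \<in> space (SM SS) \<Longrightarrow> prob_space (act_kernel SS \<pi> 1 s)"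
    by (simp add: prob_space_act_kernel)
  show "prob_space (init_dist SS \<mu> \<pi>)" "sets (init_dist SS \<mu> \<pi>) = sets (SAM SS)"
    unfolding init_dist_def
    using prob_space_bind_kernel[OF prob_space_mu sets_mu K K_prob]
      sets_bind_kernel[OF prob_space_mu sets_mu K K_prob] by simp_all
qed

lemma integral_init_dist:
  fixes f :: "'s \<times> 'a \<Rightarrow> real"
  assumes "1 \<le> H" "f \<in> borel_measurable (SAM SS)" "\<And>x. x \<in> space (SAM SS) \<Longrightarrow> \<bar>f x\<bar> \<le> B"
  shows "(\<integral>x. f x \<partial>init_dist SS \<mu> \<pi>) = (\<integral>s. (\<Sum>b\<in>UNIV. pmf (\<pi> 1 s) b * f (s, b)) \<partial>\<mu>)"
proof -
  have "(\<integral>x. f x \<partial>init_dist SS \<mu> \<pi>) = (\<integral>s. (\<integral>x. f x \<partial>act_kernel SS \<pi> 1 s) \<partial>\<mu>)"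
    unfolding init_dist_def using assms
    by (intro integral_bind_kernel[OF prob_space_mu sets_mu measurable_act_kernel assms(2,3)]) auto
  also have "\<dots> = (\<integral>s. (\<Sum>b\<in>UNIV. pmf (\<pi> 1 s) b * f (s, b)) \<partial>\<mu>)"
    by (rule integral_cong_sets[OF sets_mu]) (use integral_act_kernel assms in auto)
  finally show ?thesis .
qed

lemma
  assumes "h \<in> {1..H}"
  shows prob_space_traj_law: "prob_space (traj_law SS P \<mu> \<pi> h)"
    and sets_traj_law: "sets (traj_law SS P \<mu> \<pi> h) = sets (SAM SS)"
proof -
  have H: "1 \<le> H" and "1 + (h - 1) \<le> H" using assms by auto
  note D = prob_space_init_dist[OF H] sets_init_dist[OF H]
  show "prob_space (traj_law SS P \<mu> \<pi> h)" "sets (traj_law SS P \<mu> \<pi> h) = sets (SAM SS)"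
    unfolding traj_law_def using prob_space_occ[OF D] sets_occ[OF D] \<open>1 + (h - 1) \<le> H\<close> by simp_all
qed

lemma mdp_J_eq_Qeval:
  assumes H: "1 \<le> H"
  shows "mdp_J SS H P r \<mu> \<pi> = (\<integral>s. (\<Sum>b\<in>UNIV. pmf (\<pi> 1 s) b * Qeval \<pi> 1 s b) \<partial>\<mu>)"
proof -
  have h: "1 \<in> {1..H}" using H by auto
  have "mdp_J SS H P r \<mu> \<pi> = (\<integral>x. Qeval \<pi> 1 (fst x) (snd x) \<partial>init_dist SS \<mu> \<pi>)"
    unfolding mdp_J_def traj_law_def
  proof (rule sum_integral_occ_telescope[where U = "\<lambda>k x. Qeval \<pi> k (fst x) (snd x)" and B = "real H",
        OF prob_space_init_dist[OF H] sets_init_dist[OF H] h])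
    fix k :: nat and x :: "'s \<times> 'a" assume "k \<in> {1..<H}" "x \<in> space (SAM SS)"
    then show "Qeval \<pi> k (fst x) (snd x)
        = r k (fst x) (snd x) + (\<integral>y. Qeval \<pi> (Suc k) (fst y) (snd y) \<partial>step_kernel SS P \<pi> k x)"
      by (rule Qeval_step)
  qed (use h in \<open>auto intro: measurable_Qeval abs_Qeval_le\<close>)
  also have "\<dots> = (\<integral>s. (\<Sum>b\<in>UNIV. pmf (\<pi> 1 s) b * Qeval \<pi> 1 s b) \<partial>\<mu>)"
    using integral_init_dist[OF H measurable_Qeval[OF h] abs_Qeval_le[OF h]] by simp
  finally show ?thesis .
qed

lemma Qeval_le_Qopt:
  assumes "h \<in> {1..H}" "s \<in> SS"
  shows "Qeval \<pi> h s a \<le> Qopt h s a"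
proof -
  have "bellman_eval P r \<pi> n h s a \<le> bellman_opt P r n h s a"
    if "n + h = Suc H" "1 \<le> h" "s \<in> SS" for n h s a
    using that
  proof (induction n arbitrary: h s a)
    case 0
    then show ?case by simp
  next
    case (Suc n)
    have h: "h \<in> {1..H}" using Suc.prems by auto
    show ?case
    proof (cases "n = 0")
      case True
      then show ?thesis by simp
    next
      case False
      then have h': "Suc h \<in> {1..H}" using Suc.prems by auto
      have E: "(\<lambda>x. bellman_eval P r \<pi> n (Suc h) (fst x) (snd x)) \<in> borel_measurable (SAM SS)"
        "\<And>s' b. s' \<in> SS \<Longrightarrow> 0 \<le> bellman_eval P r \<pi> n (Suc h) s' b \<and> bellman_eval P r \<pi> n (Suc h) s' b \<le> real n"
        using bellman_eval_measurable_bounded[of n "Suc h"] Suc.prems by auto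
      have O: "(\<lambda>x. bellman_opt P r n (Suc h) (fst x) (snd x)) \<in> borel_measurable (SAM SS)"
        "\<And>s' b. s' \<in> SS \<Longrightarrow> 0 \<le> bellman_opt P r n (Suc h) s' b \<and> bellman_opt P r n (Suc h) s' b \<le> real n"
        using bellman_opt_measurable_bounded[of n "Suc h"] Suc.prems by auto
      have "(\<integral>s'. (\<Sum>b\<in>UNIV. pmf (\<pi> (Suc h) s') b * bellman_eval P r \<pi> n (Suc h) s' b) \<partial>P h s a)
          \<le> (\<integral>s'. Max (range (bellman_opt P r n (Suc h) s')) \<partial>P h s a)"
      proof (rule integral_mono_bounded_prob[OF prob_space_P[OF h Suc.prems(3)] sets_P[OF h Suc.prems(3)]
            measurable_policy_expectation[OF E(1) h'] _ measurable_Max_actions[OF O(1)]])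
        fix s' assume "s' \<in> space (SM SS)"
        then have s': "s' \<in> SS" by simp
        show "\<bar>\<Sum>b\<in>UNIV. pmf (\<pi> (Suc h) s') b * bellman_eval P r \<pi> n (Suc h) s' b\<bar> \<le> real n"
          using pmf_expectation_bounds[of 0 "bellman_eval P r \<pi> n (Suc h) s'" "real n"] E(2)[OF s'] by auto
        show "\<bar>Max (range (bellman_opt P r n (Suc h) s'))\<bar> \<le> real n"
          using O(2)[OF s'] by (auto simp: Max_ge_iff Max_le_iff abs_le_iff)
        show "(\<Sum>b\<in>UNIV. pmf (\<pi> (Suc h) s') b * bellman_eval P r \<pi> n (Suc h) s' b)
            \<le> Max (range (bellman_opt P r n (Suc h) s'))"
          using Suc.IH[of "Suc h" s'] Suc.prems s' by (intro pmf_expectation_le_Max) auto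
      qed
      then show ?thesis by simp
    qed
  qed
  with assms show ?thesis by simp
qed

lemma mdp_J_le_Qopt:
  assumes H: "1 \<le> H"
  shows "mdp_J SS H P r \<mu> \<pi> \<le> (\<integral>s. Max (range (Qopt 1 s)) \<partial>\<mu>)"
  unfolding mdp_J_eq_Qeval[OF H]
proof (rule integral_mono_bounded_prob[OF prob_space_mu sets_mu])
  have h: "1 \<in> {1..H}" using H by simp
  show "(\<lambda>s. \<Sum>b\<in>UNIV. pmf (\<pi> 1 s) b * Qeval \<pi> 1 s b) \<in> borel_measurable (SM SS)"
    by (rule measurable_policy_expectation[OF measurable_Qeval[OF h] h])
  show "(\<lambda>s. Max (range (Qopt 1 s))) \<in> borel_measurable (SM SS)"
    by (rule measurable_Max_actions[OF measurable_Qopt[OF h]])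
  fix s assume "s \<in> space (SM SS)"
  then have s: "s \<in> SS" by simp
  show "\<bar>\<Sum>b\<in>UNIV. pmf (\<pi> 1 s) b * Qeval \<pi> 1 s b\<bar> \<le> real H"
    using pmf_expectation_bounds[of 0 "Qeval \<pi> 1 s" "real H"] Qeval_bounds[OF h s] by auto
  show "\<bar>Max (range (Qopt 1 s))\<bar> \<le> real H"
    using Qopt_bounds[OF h s] by (auto simp: Max_ge_iff Max_le_iff abs_le_iff)
  show "(\<Sum>b\<in>UNIV. pmf (\<pi> 1 s) b * Qeval \<pi> 1 s b) \<le> Max (range (Qopt 1 s))"
    using Qeval_le_Qopt[OF h s] by (rule pmf_expectation_le_Max)
qed

lemma integral_traj_law_cong:
  fixes f g :: "'s \<times> 'a \<Rightarrow> real"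
  assumes h: "h \<in> {1..H}"
    and f: "f \<in> borel_measurable (SAM SS)" "\<And>x. x \<in> space (SAM SS) \<Longrightarrow> \<bar>f x\<bar> \<le> B"
    and g: "g \<in> borel_measurable (SAM SS)" "\<And>x. x \<in> space (SAM SS) \<Longrightarrow> \<bar>g x\<bar> \<le> B"
    and eq: "\<And>s. s \<in> SS \<Longrightarrow> (\<Sum>b\<in>UNIV. pmf (\<pi> h s) b * f (s, b)) = (\<Sum>b\<in>UNIV. pmf (\<pi> h s) b * g (s, b))"
  shows "(\<integral>x. f x \<partial>traj_law SS P \<mu> \<pi> h) = (\<integral>x. g x \<partial>traj_law SS P \<mu> \<pi> h)"
proof (cases "h = 1")
  case True
  have H: "1 \<le> H" using h by auto
  have "(\<integral>x. f x \<partial>traj_law SS P \<mu> \<pi> h) = (\<integral>s. (\<Sum>b\<in>UNIV. pmf (\<pi> 1 s) b * f (s, b)) \<partial>\<mu>)"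
    unfolding traj_law_def True using integral_init_dist[OF H f] by simp
  also have "\<dots> = (\<integral>s. (\<Sum>b\<in>UNIV. pmf (\<pi> 1 s) b * g (s, b)) \<partial>\<mu>)"
    by (rule integral_cong_sets[OF sets_mu]) (use eq True in auto)
  also have "\<dots> = (\<integral>x. g x \<partial>traj_law SS P \<mu> \<pi> h)"
    unfolding traj_law_def True using integral_init_dist[OF H g] by simp
  finally show ?thesis .
next
  case False
  define n where "n = h - 2"
  have n: "h - 1 = Suc n" "1 + n = h - 1" "Suc (h - 1) = h" and k: "h - 1 \<in> {1..<H}"
    using h False unfolding n_def by auto
  have H: "1 \<le> H" using h by auto
  note D = prob_space_init_dist[OF H] sets_init_dist[OF H]
  have step_eq: "(\<integral>y. f y \<partial>step_kernel SS P \<pi> (h - 1) x) = (\<integral>y. g y \<partial>step_kernel SS P \<pi> (h - 1) x)"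
    if x: "x \<in> space (SAM SS)" for x
  proof -
    obtain s a where x: "x = (s, a)" "s \<in> SS" using x by auto
    have "(\<integral>y. f y \<partial>step_kernel SS P \<pi> (h - 1) (s, a))
        = (\<integral>s'. (\<Sum>b\<in>UNIV. pmf (\<pi> h s') b * f (s', b)) \<partial>P (h - 1) s a)"
      using integral_step_kernel[OF k x(2) f] n by simp
    also have "\<dots> = (\<integral>s'. (\<Sum>b\<in>UNIV. pmf (\<pi> h s') b * g (s', b)) \<partial>P (h - 1) s a)"
      using k x(2) by (intro integral_cong_sets[OF sets_P]) (auto simp: eq)
    also have "\<dots> = (\<integral>y. g y \<partial>step_kernel SS P \<pi> (h - 1) (s, a))"
      using integral_step_kernel[OF k x(2) g] n by simp
    finally show ?thesis using x by simp
  qed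
  have "(\<integral>x. f x \<partial>traj_law SS P \<mu> \<pi> h)
      = (\<integral>x. (\<integral>y. f y \<partial>step_kernel SS P \<pi> (1 + n) x) \<partial>occ SS P \<pi> 1 (init_dist SS \<mu> \<pi>) n)"
    unfolding traj_law_def n(1) by (rule integral_occ_Suc[OF D _ _ f]) (use h n in auto)
  also have "\<dots> = (\<integral>x. (\<integral>y. g y \<partial>step_kernel SS P \<pi> (1 + n) x) \<partial>occ SS P \<pi> 1 (init_dist SS \<mu> \<pi>) n)"
    by (rule integral_cong_sets[OF sets_occ[OF D]]) (use h n step_eq in auto)
  also have "\<dots> = (\<integral>x. g x \<partial>traj_law SS P \<mu> \<pi> h)"
    unfolding traj_law_def n(1) by (rule integral_occ_Suc[OF D _ _ g, symmetric]) (use h n in auto)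
  finally show ?thesis .
qed

lemma integral_traj_law_policy_expectation:
  fixes \<phi> :: "'s \<Rightarrow> 'a \<Rightarrow> real"
  assumes h: "h \<in> {1..H}"
    and \<phi>: "(\<lambda>x. \<phi> (fst x) (snd x)) \<in> borel_measurable (SAM SS)" "\<And>s a. s \<in> SS \<Longrightarrow> \<bar>\<phi> s a\<bar> \<le> B"
  shows "(\<integral>x. (\<Sum>b\<in>UNIV. pmf (\<pi> h (fst x)) b * \<phi> (fst x) b) \<partial>traj_law SS P \<mu> \<pi> h)
    = (\<integral>x. \<phi> (fst x) (snd x) \<partial>traj_law SS P \<mu> \<pi> h)"
proof (rule integral_traj_law_cong[OF h measurable_SAM_fst[OF measurable_policy_expectation[OF \<phi>(1) h]] _ \<phi>(1)])
  fix x :: "'s \<times> 'a" assume "x \<in> space (SAM SS)"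
  then have s: "fst x \<in> SS" by auto
  have "- B \<le> \<phi> (fst x) b" "\<phi> (fst x) b \<le> B" for b
    using \<phi>(2)[OF s, of b] by auto
  then show "\<bar>\<Sum>b\<in>UNIV. pmf (\<pi> h (fst x)) b * \<phi> (fst x) b\<bar> \<le> B"
    using pmf_expectation_bounds[of "- B" "\<phi> (fst x)" B "\<pi> h (fst x)"] by (simp add: abs_le_iff)
  show "\<bar>\<phi> (fst x) (snd x)\<bar> \<le> B" using \<phi>(2)[OF s] .
qed (simp add: pmf_expectation_const)

end

context mdp
begin

lemma mdp_policyI: "is_policy SS H \<pi> \<Longrightarrow> mdp_policy SS H P r \<mu> \<pi>"
  by (simp add: mdp_policy_def mdp_policy_axioms_def mdp_axioms)

text \<open>Uniform over all maximisers rather than a chosen one, so that measurability is inherited from \<open>Qopt\<close>.\<close>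

definition greedy_policy :: "nat \<Rightarrow> 's \<Rightarrow> 'a pmf" where
  "greedy_policy h s = pmf_of_set {b. Qopt h s b = Max (range (Qopt h s))}"

lemma argmax_nonempty: "{b. f b = Max (range f)} \<noteq> {}" for f :: "'a \<Rightarrow> real"
proof -
  have "Max (range f) \<in> range f" by (rule Max_in) auto
  then show ?thesis by force
qed

lemma pmf_greedy_policy: "pmf (greedy_policy h s) b = (if Qopt h s b = Max (range (Qopt h s)) then 1 else 0)
    / (\<Sum>c\<in>UNIV. if Qopt h s c = Max (range (Qopt h s)) then 1 else 0)"
  unfolding greedy_policy_def using argmax_nonempty[of "Qopt h s"]
  by (simp add: sum.If_cases indicator_def)

lemma greedy_policy_expectation: "(\<Sum>b\<in>UNIV. pmf (greedy_policy h s) b * Qopt h s b) = Max (range (Qopt h s))"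
proof -
  define S where "S = {b. Qopt h s b = Max (range (Qopt h s))}"
  have S: "S \<noteq> {}" "finite S" unfolding S_def using argmax_nonempty by auto
  have "(\<Sum>b\<in>UNIV. pmf (greedy_policy h s) b * Qopt h s b) = (\<Sum>b\<in>UNIV. indicator S b / card S * Qopt h s b)"
    unfolding greedy_policy_def S_def[symmetric] using S by simp
  also have "\<dots> = (\<Sum>b\<in>S. Max (range (Qopt h s)) / card S)"
    by (rule sum.mono_neutral_cong_right) (auto simp: S_def indicator_def)
  also have "\<dots> = Max (range (Qopt h s))"
    using S by simp
  finally show ?thesis .
qed

lemma is_policy_greedy_policy: "is_policy SS H greedy_policy"
  unfolding is_policy_def
proof (intro ballI allI)
  fix h b assume h: "h \<in> {1..H}"
  have "(\<lambda>s. Qopt h s c) \<in> borel_measurable (SM SS)" for c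
    using measurable_SAM_slice[OF measurable_Qopt[OF h]] by simp
  then show "(\<lambda>s. pmf (greedy_policy h s) b) \<in> borel_measurable (SM SS)"
    unfolding pmf_greedy_policy using measurable_Max_actions[OF measurable_Qopt[OF h]] by measurable
qed

lemma policies_nonempty: "{\<pi> :: nat \<Rightarrow> 's \<Rightarrow> 'a pmf. is_policy SS H \<pi>} \<noteq> {}"
  using is_policy_greedy_policy by blast

lemma Qstar_eq_Qopt:
  assumes h: "h \<in> {1..H}" and s: "s \<in> SS"
  shows "Qstar SS H P r h s a = Qopt h s a"
  unfolding Qstar_def
proof (rule cSup_eq_maximum)
  interpret greedy: mdp_policy SS H P r \<mu> greedy_policy
    by (rule mdp_policyI[OF is_policy_greedy_policy])
  have "Qpi SS H P r greedy_policy h s a = Qopt h s a"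
    using greedy.Qpi_eq_Qeval[OF h s] Qeval_eq_Qopt_if_greedy[OF greedy_policy_expectation h s] by simp
  then show "Qopt h s a \<in> (\<lambda>\<pi>. Qpi SS H P r \<pi> h s a) ` {\<pi>. is_policy SS H \<pi>}"
    using is_policy_greedy_policy by force
  fix x assume "x \<in> (\<lambda>\<pi>. Qpi SS H P r \<pi> h s a) ` {\<pi>. is_policy SS H \<pi>}"
  then obtain \<pi> where \<pi>: "is_policy SS H \<pi>" and x: "x = Qpi SS H P r \<pi> h s a" by auto
  interpret mdp_policy SS H P r \<mu> \<pi> by (rule mdp_policyI[OF \<pi>])
  show "x \<le> Qopt h s a"
    unfolding x Qpi_eq_Qeval[OF h s] by (rule Qeval_le_Qopt[OF h s])
qed

lemma
  assumes H: "1 \<le> H"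
  shows mdp_Jstar_le_Qopt: "mdp_Jstar SS H P r \<mu> \<le> (\<integral>s. Max (range (Qopt 1 s)) \<partial>\<mu>)"
    and mdp_J_le_Jstar: "is_policy SS H \<pi> \<Longrightarrow> mdp_J SS H P r \<mu> \<pi> \<le> mdp_Jstar SS H P r \<mu>"
proof -
  have J_le: "mdp_J SS H P r \<mu> \<pi>' \<le> (\<integral>s. Max (range (Qopt 1 s)) \<partial>\<mu>)" if "is_policy SS H \<pi>'" for \<pi>'
    by (rule mdp_policy.mdp_J_le_Qopt[OF mdp_policyI[OF that] H])
  show "mdp_Jstar SS H P r \<mu> \<le> (\<integral>s. Max (range (Qopt 1 s)) \<partial>\<mu>)"
    unfolding mdp_Jstar_def by (rule cSUP_least[OF policies_nonempty], rule J_le, simp)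
  have "bdd_above ((\<lambda>\<pi>. mdp_J SS H P r \<mu> \<pi>) ` {\<pi>. is_policy SS H \<pi>})"
    by (rule bdd_aboveI2[where M = "\<integral>s. Max (range (Qopt 1 s)) \<partial>\<mu>"], rule J_le, simp)
  then show "mdp_J SS H P r \<mu> \<pi> \<le> mdp_Jstar SS H P r \<mu>" if "is_policy SS H \<pi>"
    unfolding mdp_Jstar_def using that by (intro cSUP_upper) simp_all
qed

lemma mdp_Jstar_horizon_zero:
  assumes "H = 0"
  shows "mdp_Jstar SS H P r \<mu> = 0"
  unfolding mdp_Jstar_def mdp_J_def using assms policies_nonempty by (simp add: cSUP_const)

end

section \<open>Regret of softmax policies\<close>

locale softmax_mdp = mdp SS H P r \<mu> for SS :: "'s::euclidean_space set" and H :: nat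
    and P :: "nat \<Rightarrow> 's \<Rightarrow> 'a::finite \<Rightarrow> 's measure"
    and r :: "nat \<Rightarrow> 's \<Rightarrow> 'a \<Rightarrow> real" and \<mu> :: "'s measure" +
  fixes \<beta> :: real and Q :: "nat \<Rightarrow> 's \<Rightarrow> 'a \<Rightarrow> real"
  assumes beta_pos: "\<beta> > 0"
    and continuous_Q: "\<forall>h\<in>{1..H}. \<forall>a. continuous_on SS (\<lambda>s. Q h s a)"
begin

abbreviation "\<pi>Q \<equiv> softmax_policy \<beta> Q"
abbreviation "\<pi>star \<equiv> softmax_policy \<beta> (Qstar SS H P r)"
abbreviation "Qsoft \<equiv> Qeval \<pi>Q"
abbreviation "traj_star \<equiv> traj_law SS P \<mu> \<pi>star"

lemma measurable_softmax:
  assumes "\<And>c. (\<lambda>s. F s c) \<in> borel_measurable (SM SS)"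
  shows "(\<lambda>s. softmax \<beta> (F s) b) \<in> borel_measurable (SM SS)"
  unfolding softmax_def using assms by measurable

lemma pmf_policy_star:
  assumes "h \<in> {1..H}" "s \<in> SS"
  shows "pmf (\<pi>star h s) b = softmax \<beta> (Qopt h s) b"
proof -
  have "Qstar SS H P r h s = Qopt h s" by (intro ext Qstar_eq_Qopt[OF assms])
  then show ?thesis by (simp add: pmf_softmax_policy)
qed

lemma measurable_Q: "h \<in> {1..H} \<Longrightarrow> (\<lambda>s. Q h s a) \<in> borel_measurable (SM SS)"
  using continuous_Q unfolding SM_def by (auto intro: borel_measurable_continuous_on_restrict)

lemma is_policy_softmax_Q: "is_policy SS H \<pi>Q"
  unfolding is_policy_def pmf_softmax_policy by (auto intro!: measurable_softmax measurable_Q)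

lemma is_policy_softmax_Qstar: "is_policy SS H \<pi>star"
  unfolding is_policy_def
proof (intro ballI allI)
  fix h b assume h: "h \<in> {1..H}"
  have "(\<lambda>s. softmax \<beta> (Qopt h s) b) \<in> borel_measurable (SM SS)"
    using measurable_SAM_slice[OF measurable_Qopt[OF h]] by (intro measurable_softmax) simp
  then show "(\<lambda>s. pmf (\<pi>star h s) b) \<in> borel_measurable (SM SS)"
    by (rule measurable_cong[THEN iffD1, rotated]) (simp add: pmf_policy_star[OF h])
qed

sublocale soft: mdp_policy SS H P r \<mu> \<pi>Q
  by (rule mdp_policyI[OF is_policy_softmax_Q])

sublocale star: mdp_policy SS H P r \<mu> \<pi>star
  by (rule mdp_policyI[OF is_policy_softmax_Qstar])

definition Vsoft :: "nat \<Rightarrow> 's \<Rightarrow> real" where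
  "Vsoft h s = (\<Sum>b\<in>UNIV. pmf (\<pi>Q h s) b * Qsoft h s b)"

definition Vopt :: "nat \<Rightarrow> 's \<Rightarrow> real" where
  "Vopt h s = Max (range (Qopt h s))"

definition value_gap :: "nat \<Rightarrow> 's \<Rightarrow> real" where
  "value_gap h s = Vopt h s - Vsoft h s"

definition Q_error :: "nat \<Rightarrow> 's \<Rightarrow> real" where
  "Q_error h s = Max (range (\<lambda>a. \<bar>Qstar SS H P r h s a - Q h s a\<bar>))"

lemma measurable_Vopt: "h \<in> {1..H} \<Longrightarrow> Vopt h \<in> borel_measurable (SM SS)"
  unfolding Vopt_def[abs_def] by (intro measurable_Max_actions measurable_Qopt)

lemma measurable_Vsoft: "h \<in> {1..H} \<Longrightarrow> Vsoft h \<in> borel_measurable (SM SS)"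
  unfolding Vsoft_def[abs_def] by (intro soft.measurable_policy_expectation soft.measurable_Qeval)

lemma measurable_value_gap: "h \<in> {1..H} \<Longrightarrow> value_gap h \<in> borel_measurable (SM SS)"
  unfolding value_gap_def[abs_def] by (intro borel_measurable_diff measurable_Vopt measurable_Vsoft)

lemma value_bounds:
  assumes "h \<in> {1..H}" "s \<in> SS"
  shows "0 \<le> Vsoft h s" "Vsoft h s \<le> real H" "0 \<le> Vopt h s" "Vopt h s \<le> real H"
  using pmf_expectation_bounds[of 0 "Qsoft h s" "real H" "\<pi>Q h s"] soft.Qeval_bounds[OF assms]
    Qopt_bounds[OF assms]
  by (auto simp: Vsoft_def Vopt_def Max_ge_iff Max_le_iff)

lemma abs_value_gap_le: "h \<in> {1..H} \<Longrightarrow> s \<in> SS \<Longrightarrow> \<bar>value_gap h s\<bar> \<le> real H"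
  using value_bounds[of h s] by (simp add: value_gap_def abs_le_iff)

lemma Q_error_eq: "h \<in> {1..H} \<Longrightarrow> s \<in> SS \<Longrightarrow> Q_error h s = Max (range (\<lambda>a. \<bar>Qopt h s a - Q h s a\<bar>))"
  by (simp add: Q_error_def Qstar_eq_Qopt)

lemma measurable_Q_error: "h \<in> {1..H} \<Longrightarrow> Q_error h \<in> borel_measurable (SM SS)"
proof -
  assume h: "h \<in> {1..H}"
  have "(\<lambda>s. Max (range (\<lambda>a. \<bar>Qopt h s a - Q h s a\<bar>))) \<in> borel_measurable (SM SS)"
    using measurable_SAM_slice[OF measurable_Qopt[OF h]] measurable_Q[OF h]
    by (intro borel_measurable_Max) auto
  then show ?thesis
    by (rule measurable_cong[THEN iffD1, rotated]) (auto simp: Q_error_eq[OF h])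
qed

lemma Q_error_nonneg: "0 \<le> Q_error h s"
  unfolding Q_error_def by (rule order_trans[OF abs_ge_zero Max_ge]) auto

lemma value_gap_le:
  assumes h: "h \<in> {1..H}" and s: "s \<in> SS"
  shows "value_gap h s \<le> ln (real CARD('a)) / \<beta> + 2 * \<beta> * real H * Q_error h s
     + (\<Sum>b\<in>UNIV. pmf (\<pi>star h s) b * (Qopt h s b - Qsoft h s b))"
proof -
  let ?p = "softmax \<beta> (Qopt h s)" and ?q = "softmax \<beta> (Q h s)"
  text \<open>Split \<open>V\<^sup>* - V\<^sup>\<pi>\<close> at the softmax of \<open>Q\<^sup>*\<close>: a softmax suboptimality term, the expected
    \<open>Q\<^sup>* - Q\<^sup>\<pi>\<close> under \<open>\<pi>\<^sup>*\<close>, and the change of action distribution from \<open>\<pi>\<^sup>*\<close> to \<open>\<pi>\<close>.\<close>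
  have decomp: "value_gap h s = (Max (range (Qopt h s)) - (\<Sum>b\<in>UNIV. ?p b * Qopt h s b))
      + (\<Sum>b\<in>UNIV. ?p b * (Qopt h s b - Qsoft h s b))
      + (\<Sum>b\<in>UNIV. (?p b - ?q b) * Qsoft h s b)"
    unfolding value_gap_def Vopt_def Vsoft_def pmf_softmax_policy
    by (simp add: algebra_simps sum_subtractf sum.distrib)
  have suboptimality: "Max (range (Qopt h s)) - (\<Sum>b\<in>UNIV. ?p b * Qopt h s b) \<le> ln (real CARD('a)) / \<beta>"
    by (rule Max_minus_softmax_expectation_le[OF beta_pos])
  have "(\<Sum>b\<in>UNIV. (?p b - ?q b) * Qsoft h s b) \<le> real H * (2 * \<beta> * Q_error h s)"
    unfolding Q_error_eq[OF h s]
    by (rule softmax_expectation_diff_le[OF beta_pos]) (use soft.Qeval_bounds[OF h s] in auto)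
  then have shift: "(\<Sum>b\<in>UNIV. (?p b - ?q b) * Qsoft h s b) \<le> 2 * \<beta> * real H * Q_error h s"
    by (simp add: ac_simps)
  show ?thesis
    unfolding pmf_policy_star[OF h s] using decomp suboptimality shift by linarith
qed

lemma Qopt_minus_Qsoft_step:
  assumes h: "h \<in> {1..<H}" and x: "x \<in> space (SAM SS)"
  shows "Qopt h (fst x) (snd x) - Qsoft h (fst x) (snd x)
    = (\<integral>y. value_gap (Suc h) (fst y) \<partial>step_kernel SS P \<pi>star h x)"
proof -
  obtain s a where x: "x = (s, a)" "s \<in> SS" using x by auto
  have h': "h \<in> {1..H}" "Suc h \<in> {1..H}" using h by auto
  note P = prob_space_P[OF h'(1) x(2)] sets_P[OF h'(1) x(2)]
  have "Qopt h s a - Qsoft h s a = (\<integral>s'. Vopt (Suc h) s' \<partial>P h s a) - (\<integral>s'. Vsoft (Suc h) s' \<partial>P h s a)"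
    using h by (simp add: Vopt_def Vsoft_def Suc_diff_le)
  also have "\<dots> = (\<integral>s'. value_gap (Suc h) s' \<partial>P h s a)"
    unfolding value_gap_def using value_bounds[OF h'(2)]
    by (intro Bochner_Integration.integral_diff[symmetric] integrable_bounded_prob[OF P, where B = "real H"]
        measurable_Vopt[OF h'(2)] measurable_Vsoft[OF h'(2)]) auto
  also have "\<dots> = (\<integral>y. value_gap (Suc h) (fst y) \<partial>step_kernel SS P \<pi>star h (s, a))"
    using star.integral_step_kernel[OF h x(2) measurable_SAM_fst[OF measurable_value_gap[OF h'(2)]],
        where B = "real H"] abs_value_gap_le[OF h'(2)]
    by (auto simp: pmf_expectation_const)
  finally show ?thesis using x by simp
qed

lemma integral_Qopt_minus_Qsoft:
  assumes h: "h \<in> {1..H}"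
  shows "(\<integral>x. Qopt h (fst x) (snd x) - Qsoft h (fst x) (snd x) \<partial>traj_star h)
    = (if h < H then (\<integral>x. value_gap (Suc h) (fst x) \<partial>traj_star (Suc h)) else 0)"
proof (cases "h < H")
  case True
  have k: "h \<in> {1..<H}" "1 + (h - 1) = h" "1 + Suc (h - 1) \<le> H" "Suc h - 1 = Suc (h - 1)"
    using h True by auto
  have H: "1 \<le> H" and h': "Suc h \<in> {1..H}" using h True by auto
  note D = star.prob_space_init_dist[OF H] star.sets_init_dist[OF H]
  have "(\<integral>x. Qopt h (fst x) (snd x) - Qsoft h (fst x) (snd x) \<partial>traj_star h)
      = (\<integral>x. (\<integral>y. value_gap (Suc h) (fst y) \<partial>step_kernel SS P \<pi>star h x) \<partial>traj_star h)"
    by (rule integral_cong_sets[OF star.sets_traj_law[OF h]]) (use Qopt_minus_Qsoft_step[OF k(1)] in auto)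
  also have "\<dots> = (\<integral>x. value_gap (Suc h) (fst x) \<partial>traj_star (Suc h))"
    using star.integral_occ_Suc[OF D _ k(3) measurable_SAM_fst[OF measurable_value_gap[OF h']], where B = "real H"]
      abs_value_gap_le[OF h'] k
    by (auto simp: traj_law_def)
  finally show ?thesis using True by simp
qed (use h in simp)

lemma integral_value_gap_le:
  assumes h: "h \<in> {1..H}" and err_int: "integrable (traj_star h) (\<lambda>x. Q_error h (fst x))"
  shows "(\<integral>x. value_gap h (fst x) \<partial>traj_star h)
     \<le> ln (real CARD('a)) / \<beta> + 2 * \<beta> * real H * (\<integral>x. Q_error h (fst x) \<partial>traj_star h)
       + (if h < H then (\<integral>x. value_gap (Suc h) (fst x) \<partial>traj_star (Suc h)) else 0)"
proof -
  note T = star.prob_space_traj_law[OF h] star.sets_traj_law[OF h]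
  define c where "c = ln (real CARD('a)) / \<beta>"
  define k where "k = 2 * \<beta> * real H"
  define \<psi> where "\<psi> x = (\<Sum>b\<in>UNIV. pmf (\<pi>star h (fst x)) b * (Qopt h (fst x) b - Qsoft h (fst x) b))"
    for x :: "'s \<times> 'a"
  have diff_meas: "(\<lambda>x. Qopt h (fst x) (snd x) - Qsoft h (fst x) (snd x)) \<in> borel_measurable (SAM SS)"
    using measurable_Qopt[OF h] soft.measurable_Qeval[OF h] by (rule borel_measurable_diff)
  have diff_bnd: "\<bar>Qopt h s a - Qsoft h s a\<bar> \<le> real H" if "s \<in> SS" for s a
    using Qopt_bounds[OF h that, of a] soft.Qeval_bounds[OF h that, of a] by (simp add: abs_le_iff)
  have \<psi>_eq: "(\<integral>x. \<psi> x \<partial>traj_star h) = (\<integral>x. Qopt h (fst x) (snd x) - Qsoft h (fst x) (snd x) \<partial>traj_star h)"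
    unfolding \<psi>_def by (rule star.integral_traj_law_policy_expectation[OF h diff_meas diff_bnd])
  have \<psi>_bnd: "\<bar>\<psi> x\<bar> \<le> real H" if "x \<in> space (SAM SS)" for x
  proof -
    have "fst x \<in> SS" using that by auto
    then have lo: "- real H \<le> Qopt h (fst x) b - Qsoft h (fst x) b"
      and hi: "Qopt h (fst x) b - Qsoft h (fst x) b \<le> real H" for b
      using diff_bnd[of "fst x" b] by (simp_all add: abs_le_iff)
    show ?thesis
      unfolding \<psi>_def
      using pmf_expectation_bounds[of "- real H" "\<lambda>b. Qopt h (fst x) b - Qsoft h (fst x) b" "real H"
          "\<pi>star h (fst x)", OF lo hi]
      by (simp add: abs_le_iff)
  qed
  have \<psi>_int: "integrable (traj_star h) \<psi>"
    unfolding \<psi>_def[abs_def]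
    by (rule integrable_bounded_prob[OF T measurable_SAM_fst[OF star.measurable_policy_expectation[OF diff_meas h]]
          \<psi>_bnd[unfolded \<psi>_def]])
  have gap_int: "integrable (traj_star h) (\<lambda>x. value_gap h (fst x))"
    using abs_value_gap_le[OF h]
    by (intro integrable_bounded_prob[OF T measurable_SAM_fst[OF measurable_value_gap[OF h]]]) auto
  have bound_int: "integrable (traj_star h) (\<lambda>x. c + k * Q_error h (fst x) + \<psi> x)"
    using err_int \<psi>_int prob_space.finite_measure[OF T(1)]
    by (intro Bochner_Integration.integrable_add integrable_mult_right) (auto simp: finite_measure.integrable_const)
  have "(\<integral>x. value_gap h (fst x) \<partial>traj_star h) \<le> (\<integral>x. c + k * Q_error h (fst x) + \<psi> x \<partial>traj_star h)"
    using value_gap_le[OF h] sets_eq_imp_space_eq[OF T(2)]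
    by (intro integral_mono[OF gap_int bound_int]) (auto simp: c_def k_def \<psi>_def)
  also have "\<dots> = c + k * (\<integral>x. Q_error h (fst x) \<partial>traj_star h) + (\<integral>x. \<psi> x \<partial>traj_star h)"
    using err_int \<psi>_int T(1) by (simp add: prob_space.prob_space finite_measure.integrable_const prob_space_def)
  finally show ?thesis
    unfolding \<psi>_eq integral_Qopt_minus_Qsoft[OF h] c_def k_def .
qed

lemma integral_value_gap_le_sum:
  assumes err_int: "\<And>j. j \<in> {1..H} \<Longrightarrow> integrable (traj_star j) (\<lambda>x. Q_error j (fst x))"
    and h: "h \<in> {1..H}"
  shows "(\<integral>x. value_gap h (fst x) \<partial>traj_star h)
     \<le> real (Suc H - h) * (ln (real CARD('a)) / \<beta>)
       + 2 * \<beta> * real H * (\<Sum>j = h..H. \<integral>x. Q_error j (fst x) \<partial>traj_star j)"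
  using h
proof (induction "H - h" arbitrary: h)
  case 0
  then have "h = H" by simp
  with integral_value_gap_le[OF 0(2) err_int[OF 0(2)]] show ?case by simp
next
  case (Suc m)
  then have h': "Suc h \<in> {1..H}" "h < H" "m = H - Suc h" by auto
  define c where "c = ln (real CARD('a)) / \<beta>"
  define K where "K = 2 * \<beta> * real H"
  define I where "I j = (\<integral>x. Q_error j (fst x) \<partial>traj_star j)" for j
  define G where "G j = (\<integral>x. value_gap j (fst x) \<partial>traj_star j)" for j
  have IH: "G (Suc h) \<le> real (Suc H - Suc h) * c + K * (\<Sum>j = Suc h..H. I j)"
    using Suc.hyps(1)[OF h'(3) h'(1)] unfolding G_def I_def c_def K_def .
  have step: "G h \<le> c + K * I h + G (Suc h)"
    using integral_value_gap_le[OF Suc.prems err_int[OF Suc.prems]] h'(2)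
    unfolding G_def I_def c_def K_def by simp
  have split: "(\<Sum>j = h..H. I j) = I h + (\<Sum>j = Suc h..H. I j)"
    using h'(2) by (intro sum.atLeast_Suc_atMost) simp
  have "real (Suc H - h) * c = c + real (Suc H - Suc h) * c"
    using h'(2) by (simp add: algebra_simps)
  then have "G h \<le> real (Suc H - h) * c + K * (\<Sum>j = h..H. I j)"
    using IH step unfolding split distrib_left by linarith
  then show ?case unfolding G_def I_def c_def K_def .
qed

lemma regret_le:
  assumes H: "1 \<le> H"
    and err_int: "\<And>j. j \<in> {1..H} \<Longrightarrow> integrable (traj_star j) (\<lambda>x. Q_error j (fst x))"
  shows "mdp_Jstar SS H P r \<mu> - mdp_J SS H P r \<mu> \<pi>Q
     \<le> real H * (ln (real CARD('a)) / \<beta>)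
       + 2 * \<beta> * real H * (\<Sum>j = 1..H. \<integral>x. Q_error j (fst x) \<partial>traj_star j)"
proof -
  have h: "1 \<in> {1..H}" using H by auto
  have int: "integrable \<mu> (Vopt 1)" "integrable \<mu> (Vsoft 1)"
    by (rule integrable_bounded_prob[OF prob_space_mu sets_mu measurable_Vopt[OF h], where B = "real H"]
        integrable_bounded_prob[OF prob_space_mu sets_mu measurable_Vsoft[OF h], where B = "real H"];
        use value_bounds[OF h] in auto)+
  have "mdp_Jstar SS H P r \<mu> - mdp_J SS H P r \<mu> \<pi>Q \<le> (\<integral>s. Vopt 1 s \<partial>\<mu>) - (\<integral>s. Vsoft 1 s \<partial>\<mu>)"
    using mdp_Jstar_le_Qopt[OF H] soft.mdp_J_eq_Qeval[OF H] by (simp add: Vopt_def Vsoft_def)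
  also have "\<dots> = (\<integral>s. value_gap 1 s \<partial>\<mu>)"
    unfolding value_gap_def by (rule Bochner_Integration.integral_diff[OF int, symmetric])
  also have "\<dots> = (\<integral>x. value_gap 1 (fst x) \<partial>traj_star 1)"
    using star.integral_init_dist[OF H measurable_SAM_fst[OF measurable_value_gap[OF h]], where B = "real H"]
      abs_value_gap_le[OF h]
    by (auto simp: traj_law_def pmf_expectation_const)
  also have "\<dots> \<le> real H * (ln (real CARD('a)) / \<beta>)
       + 2 * \<beta> * real H * (\<Sum>j = 1..H. \<integral>x. Q_error j (fst x) \<partial>traj_star j)"
    using integral_value_gap_le_sum[OF err_int h] by simp
  finally show ?thesis .
qed

lemma regret_nonneg: "0 \<le> mdp_Jstar SS H P r \<mu> - mdp_J SS H P r \<mu> \<pi>Q"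
proof (cases "H = 0")
  case True
  then show ?thesis unfolding mdp_Jstar_horizon_zero[OF True] by (simp add: mdp_J_def)
next
  case False
  then show ?thesis using mdp_J_le_Jstar[OF _ is_policy_softmax_Q] by simp
qed

lemma
  assumes "j \<in> {1..H}" "(\<integral>\<^sup>+ x. ennreal (Q_error j (fst x)) \<partial>traj_star j) \<noteq> \<top>"
  shows integrable_Q_error: "integrable (traj_star j) (\<lambda>x. Q_error j (fst x))"
    and nn_integral_Q_error:
      "(\<integral>\<^sup>+ x. ennreal (Q_error j (fst x)) \<partial>traj_star j) = ennreal (\<integral>x. Q_error j (fst x) \<partial>traj_star j)"
proof -
  have "(\<lambda>x. Q_error j (fst x)) \<in> borel_measurable (traj_star j)"
    using measurable_SAM_fst[OF measurable_Q_error[OF assms(1)]] star.sets_traj_law[OF assms(1)]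
    by (simp cong: measurable_cong_sets)
  then show int: "integrable (traj_star j) (\<lambda>x. Q_error j (fst x))"
    using assms(2) by (intro integrableI_nonneg) (auto simp: Q_error_nonneg top.not_eq_extremum)
  show "(\<integral>\<^sup>+ x. ennreal (Q_error j (fst x)) \<partial>traj_star j) = ennreal (\<integral>x. Q_error j (fst x) \<partial>traj_star j)"
    by (rule nn_integral_eq_integral[OF int]) (simp add: Q_error_nonneg)
qed

lemma regret_le_ennreal:
  "ennreal (mdp_Jstar SS H P r \<mu> - mdp_J SS H P r \<mu> \<pi>Q)
    \<le> ennreal (real H * ln (real CARD('a)) / \<beta>)
      + ennreal (2 * \<beta> * real H) * (\<Sum>h = 1..H. \<integral>\<^sup>+ x. ennreal (Q_error h (fst x)) \<partial>traj_star h)"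
proof (cases "H = 0 \<or> (\<exists>j\<in>{1..H}. (\<integral>\<^sup>+ x. ennreal (Q_error j (fst x)) \<partial>traj_star j) = \<top>)")
  case True
  then consider "H = 0" | "H \<noteq> 0" "(\<Sum>h = 1..H. \<integral>\<^sup>+ x. ennreal (Q_error h (fst x)) \<partial>traj_star h) = \<top>"
    by auto
  then show ?thesis
  proof cases
    case 1
    then show ?thesis unfolding mdp_Jstar_horizon_zero[OF 1] by (simp add: mdp_J_def)
  next
    case 2
    then have "ennreal (2 * \<beta> * real H) \<noteq> 0" using beta_pos by simp
    then have "ennreal (2 * \<beta> * real H) * (\<Sum>h = 1..H. \<integral>\<^sup>+ x. ennreal (Q_error h (fst x)) \<partial>traj_star h) = \<top>"
      unfolding 2(2) by (rule ennreal_top_mult_left)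
    then show ?thesis by simp
  qed
next
  case False
  then have H: "1 \<le> H" and finite: "\<And>j. j \<in> {1..H} \<Longrightarrow> (\<integral>\<^sup>+ x. ennreal (Q_error j (fst x)) \<partial>traj_star j) \<noteq> \<top>"
    by auto
  define S where "S = (\<Sum>j = 1..H. \<integral>x. Q_error j (fst x) \<partial>traj_star j)"
  have S: "0 \<le> S"
    unfolding S_def by (intro sum_nonneg integral_nonneg_AE) (simp add: Q_error_nonneg)
  have sum_eq: "(\<Sum>h = 1..H. \<integral>\<^sup>+ x. ennreal (Q_error h (fst x)) \<partial>traj_star h) = ennreal S"
  proof -
    have "(\<Sum>h = 1..H. \<integral>\<^sup>+ x. ennreal (Q_error h (fst x)) \<partial>traj_star h)
        = (\<Sum>h = 1..H. ennreal (\<integral>x. Q_error h (fst x) \<partial>traj_star h))"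
      using finite by (intro sum.cong refl nn_integral_Q_error) auto
    also have "\<dots> = ennreal S"
      unfolding S_def by (intro sum_ennreal integral_nonneg_AE) (simp add: Q_error_nonneg)
    finally show ?thesis .
  qed
  have "mdp_Jstar SS H P r \<mu> - mdp_J SS H P r \<mu> \<pi>Q \<le> real H * ln (real CARD('a)) / \<beta> + 2 * \<beta> * real H * S"
    using regret_le[OF H integrable_Q_error[OF _ finite]] unfolding S_def by simp
  then have "ennreal (mdp_Jstar SS H P r \<mu> - mdp_J SS H P r \<mu> \<pi>Q)
      \<le> ennreal (real H * ln (real CARD('a)) / \<beta> + 2 * \<beta> * real H * S)"
    by (rule ennreal_leI)
  also have "\<dots> = ennreal (real H * ln (real CARD('a)) / \<beta>) + ennreal (2 * \<beta> * real H) * ennreal S"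
    using beta_pos S by (simp add: ennreal_plus ennreal_mult)
  finally show ?thesis unfolding sum_eq .
qed

end

theorem theorem1:
  fixes SS :: "'s::euclidean_space set" and H :: nat
    and P :: "nat \<Rightarrow> 's \<Rightarrow> 'a::finite \<Rightarrow> 's measure"
    and r :: "nat \<Rightarrow> 's \<Rightarrow> 'a \<Rightarrow> real" and \<mu> :: "'s measure"
    and \<beta> :: real and Q :: "nat \<Rightarrow> 's \<Rightarrow> 'a \<Rightarrow> real"
  assumes mdp: "is_mdp SS H P r \<mu>"
    and beta: "\<beta> > 0"
    and Qcont: "\<forall>h\<in>{1..H}. \<forall>a. continuous_on SS (\<lambda>s. Q h s a)"
  shows "0 \<le> mdp_Jstar SS H P r \<mu> - mdp_J SS H P r \<mu> (softmax_policy \<beta> Q)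
    \<and> ennreal (mdp_Jstar SS H P r \<mu> - mdp_J SS H P r \<mu> (softmax_policy \<beta> Q))
        \<le> ennreal (real H * ln (real CARD('a)) / \<beta>)
          + ennreal (2 * \<beta> * real H) *
            (\<Sum>h = 1..H. \<integral>\<^sup>+ x. ennreal (Max (range (\<lambda>a. \<bar>Qstar SS H P r h (fst x) a - Q h (fst x) a\<bar>)))
               \<partial>traj_law SS P \<mu> (softmax_policy \<beta> (Qstar SS H P r)) h)"
proof -
  interpret softmax_mdp SS H P r \<mu> \<beta> Q
    by (rule softmax_mdp.intro[OF mdp.intro[OF mdp] softmax_mdp_axioms.intro[OF beta Qcont]])
  show ?thesis
    using regret_nonneg regret_le_ennreal unfolding Q_error_def by simp
qed

end
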